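(* Let $n\ge6$ be even and let $\mathbf X=\mathbf U+\mathbf E\in\mathbb R^{n\times p}$, where $\mathbf U_{1\cdot}=\dots=\mathbf U_{n/2\cdot}=\mathbf c_1$ and $\mathbf U_{n/2+1\cdot}=\dots=\mathbf U_{n\cdot}=\mathbf c_2$, and the rows of $\mathbf E$ are independent, mean zero, with sub-Gaussian norm $\sigma_p$. Construct the symmetric matrix $\boldsymbol\Phi\in\{0,1\}^{n\times n}$ with zero diagonal by setting $\Phi_{ij}=1$ for $i\ne j$ whenever $\mathbf U_{i\cdot}=\mathbf U_{j\cdot}$, and additionally $\Phi_{i,i+n/2}=\Phi_{i+n/2,i}=1$ for $k$ distinct values of $i\in\{1,\dots,n/2\}$, where $1\le k\le n/2$; all other entries are $0$. Let $G=(V,\mathcal E)$ be the corresponding graph with oriented edge-incidence matrix $\mathbf F$. Then $$\frac{\|\mathbf F^\dagger\mathbf E\|_{\max}}{n\sqrt p}\sum_{(i,j)\in\mathcal E}\sqrt{\Phi_{ij}}\,\|\mathbf U_{i\cdot}-\mathbf U_{j\cdot}\|_2\le\sigma_p\sqrt{\frac{\log(np)}{p}}\Big(\sqrt{\frac2n}+\frac{8k}{n^2}\Big)\|\mathbf c_1-\mathbf c_2\|_2$$ with probability at least $1-\frac{2}{np}$.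
   Context: The sub-Gaussian norm of a random vector $\mathbf Y\in\mathbb R^p$ is $\sup_{\|\mathbf v\|_2=1}\inf\{K>0:\mathbb E[\exp((\mathbf v^\top\mathbf Y)^2/K^2)]\le2\}$. Edges $(i,j)\in\mathcal E$ are indexed with $i<j$. An oriented edge-incidence matrix $\mathbf F\in\mathbb R^{n\times|\mathcal E|}$ has, for each edge $(j,k)$ with column index $\mathcal E(j,k)$, entries $\mathbf F_{j,\mathcal E(j,k)}=-\mathbf F_{k,\mathcal E(j,k)}=\sqrt{\Phi_{jk}}$ and zeros elsewhere. $\mathbf F^\dagger$ is the Moore–Penrose pseudoinverse and $\|\cdot\|_{\max}$ the maximum absolute entry. *)

theory Defs
  imports "HOL-Probability.Probability" "Jordan_Normal_Form.Matrix"
begin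

text \<open>Vectors in R^p are represented as functions nat => real, only coordinates l < p matter.\<close>

definition vnorm :: "nat \<Rightarrow> (nat \<Rightarrow> real) \<Rightarrow> real" where
  "vnorm p v = sqrt (\<Sum>l<p. (v l)\<^sup>2)"

text \<open>Sub-Gaussian norm of a random vector Y in R^p (ereal; infinity if not sub-Gaussian):
  sup over unit v of inf {K>0. E exp((v^T Y)^2/K^2) <= 2}.\<close>

definition subgaussian_norm :: "'a measure \<Rightarrow> nat \<Rightarrow> ('a \<Rightarrow> nat \<Rightarrow> real) \<Rightarrow> ereal" where
  "subgaussian_norm M p Y =
     (SUP v \<in> {v :: nat \<Rightarrow> real. (\<Sum>l<p. (v l)\<^sup>2) = 1}.
        INF K \<in> {K :: real. K > 0 \<and>
            (\<integral>\<^sup>+ \<omega>. ennreal (exp ((\<Sum>l<p. v l * Y \<omega> l)\<^sup>2 / K\<^sup>2)) \<partial>M) \<le> 2}. ereal K)"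

definition pseudo_inverse :: "real mat \<Rightarrow> real mat" where
  "pseudo_inverse A = (THE B. B \<in> carrier_mat (dim_col A) (dim_row A) \<and>
      A * B * A = A \<and> B * A * B = B \<and>
      transpose_mat (A * B) = A * B \<and> transpose_mat (B * A) = B * A)"

definition max_norm :: "real mat \<Rightarrow> real" where
  "max_norm A = Max ({\<bar>A $$ (i, j)\<bar> | i j. i < dim_row A \<and> j < dim_col A} \<union> {0})"

definition edge_set :: "nat \<Rightarrow> (nat \<Rightarrow> nat \<Rightarrow> real) \<Rightarrow> (nat \<times> nat) set" where
  "edge_set n \<Phi> = {(i, j). i < j \<and> j < n \<and> \<Phi> i j \<noteq> 0}"

definition edge_list :: "nat \<Rightarrow> (nat \<Rightarrow> nat \<Rightarrow> real) \<Rightarrow> (nat \<times> nat) list" where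
  "edge_list n \<Phi> = [(i, j). i \<leftarrow> [0..<n], j \<leftarrow> [0..<n], i < j \<and> \<Phi> i j \<noteq> 0]"

definition incidence_mat :: "nat \<Rightarrow> (nat \<Rightarrow> nat \<Rightarrow> real) \<Rightarrow> real mat" where
  "incidence_mat n \<Phi> =
     (let es = edge_list n \<Phi> in
      mat n (length es) (\<lambda>(r, c). (case es ! c of (j, k) \<Rightarrow>
         if r = j then sqrt (\<Phi> j k) else if r = k then - sqrt (\<Phi> j k) else 0)))"

end

theory Submission
  imports Defs
begin

text \<open>The pseudoinverse of an incidence matrix is \<open>F\<^sup>\<dagger> = F\<^sup>T L\<^sup>\<dagger>\<close> with \<open>L = F F\<^sup>T\<close> the
  graph Laplacian, so the row of \<open>F\<^sup>\<dagger> E\<close> belonging to an edge \<open>(a, b)\<close> is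
  \<open>(L\<^sup>\<dagger>\<^sub>a - L\<^sup>\<dagger>\<^sub>b) E\<close>. For the two-cluster graph \<open>L\<^sup>\<dagger>\<close> is explicit: on vectors
  \<open>(y + z, y - z)\<close> the Laplacian splits into \<open>m I - J\<close> on \<open>y\<close> and \<open>diag (m + 2 \<one>\<^sub>S) - J\<close>
  on \<open>z\<close>, the latter inverted by Sherman--Morrison. This gives
  \<open>\<parallel>L\<^sup>\<dagger>\<^sub>a - L\<^sup>\<dagger>\<^sub>b\<parallel>\<^sup>2 \<le> (2n/k\<^sup>2 + 64/n\<^sup>2)/8\<close> for the \<open>k\<close> cross edges and
  \<open>\<le> (2n/k\<^sup>2 + 64/n\<^sup>2)/12\<close> for all others. Each entry of \<open>F\<^sup>\<dagger> E\<close> is a weighted sum of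
  independent sub-Gaussian variables, so by a Chernoff bound it exceeds
  \<open>\<sigma> \<surd>(log np) (\<surd>(2n)/k + 8/n)\<close> with probability at most \<open>2 (np)\<^sup>-\<^sup>2\<close> on a cross edge and
  \<open>2 (np)\<^sup>-\<^sup>3\<close> elsewhere; a union bound over the \<open>p\<close> columns, the \<open>k\<close> cross edges and the
  at most \<open>n\<^sup>2/2\<close> other edges leaves failure probability \<open>2/(np)\<close>. In the edge sum only the
  cross edges contribute, each with \<open>\<parallel>c\<^sub>1 - c\<^sub>2\<parallel>\<close>.\<close>

section \<open>The pseudoinverse of an incidence matrix\<close>

lemma penrose_left_eq:
  fixes A B C :: "real mat"
  assumes A: "A \<in> carrier_mat nr nc" and B: "B \<in> carrier_mat nc nr" and C: "C \<in> carrier_mat nc nr"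
    and "A * B * A = A" "transpose_mat (A * B) = A * B"
    and "A * C * A = A" "transpose_mat (A * C) = A * C"
  shows "A * B = A * C"
proof -
  have AC: "transpose_mat A = transpose_mat A * (A * C)"
    using transpose_mult[OF mult_carrier_mat[OF A C] A] assms by simp
  have "A * B = transpose_mat B * transpose_mat A"
    using assms transpose_mult[OF A B] by simp
  also have "\<dots> = (transpose_mat B * transpose_mat A) * (A * C)"
    using A B C AC assoc_mult_mat[of "transpose_mat B" nr nc "transpose_mat A" nr "A * C" nr] by simp
  also have "transpose_mat B * transpose_mat A = A * B"
    using assms transpose_mult[OF A B] by simp
  also have "(A * B) * (A * C) = (A * B * A) * C"
    by (subst assoc_mult_mat[of "A * B" nr nr A nc C nr]) (use A B C in auto)
  finally show ?thesis using assms by simp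
qed

lemma penrose_right_eq:
  fixes A B C :: "real mat"
  assumes A: "A \<in> carrier_mat nr nc" and B: "B \<in> carrier_mat nc nr" and C: "C \<in> carrier_mat nc nr"
    and "A * B * A = A" "transpose_mat (B * A) = B * A"
    and "A * C * A = A" "transpose_mat (C * A) = C * A"
  shows "B * A = C * A"
proof -
  have CA: "transpose_mat A = (C * A) * transpose_mat A"
    using transpose_mult[OF A mult_carrier_mat[OF C A]] assms A C by simp
  have "B * A = transpose_mat A * transpose_mat B"
    using assms transpose_mult[OF B A] by simp
  also have "\<dots> = (C * A) * (transpose_mat A * transpose_mat B)"
    using A B C CA assoc_mult_mat[of "C * A" nc nc "transpose_mat A" nr "transpose_mat B" nc] by simp
  also have "transpose_mat A * transpose_mat B = B * A"
    using assms transpose_mult[OF B A] by simp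
  also have "(C * A) * (B * A) = C * (A * B * A)"
    using A B C by (simp add: assoc_mult_mat[of C nc nr A nc "B * A" nc])
  finally show ?thesis using assms by simp
qed

lemma penrose_conditions_unique:
  fixes A B C :: "real mat"
  assumes A: "A \<in> carrier_mat nr nc" and B: "B \<in> carrier_mat nc nr" and C: "C \<in> carrier_mat nc nr"
    and B_penrose: "A * B * A = A" "B * A * B = B" "transpose_mat (A * B) = A * B" "transpose_mat (B * A) = B * A"
    and C_penrose: "A * C * A = A" "C * A * C = C" "transpose_mat (A * C) = A * C" "transpose_mat (C * A) = C * A"
  shows "B = C"
proof -
  have "B = B * (A * C)"
    using B_penrose penrose_left_eq[OF A B C] C_penrose A B by simp
  also have "\<dots> = (B * A) * C" using A B C by simp
  also have "\<dots> = (C * A) * C"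
    using penrose_right_eq[OF A B C] B_penrose C_penrose by simp
  finally show ?thesis using C_penrose by simp
qed

lemma pseudo_inverse_eqI:
  fixes A B :: "real mat"
  assumes A: "A \<in> carrier_mat nr nc" and B: "B \<in> carrier_mat nc nr"
    and "A * B * A = A" and "B * A * B = B"
    and "transpose_mat (A * B) = A * B" and "transpose_mat (B * A) = B * A"
  shows "pseudo_inverse A = B"
  unfolding pseudo_inverse_def
proof (rule the_equality)
  fix C assume "C \<in> carrier_mat (dim_col A) (dim_row A) \<and> A * C * A = A \<and> C * A * C = C \<and>
    transpose_mat (A * C) = A * C \<and> transpose_mat (C * A) = C * A"
  then show "C = B" using penrose_conditions_unique[OF A B, of C] assms by auto
qed (use assms in auto)

lemma concat_map_if_singleton:
  "concat (map (\<lambda>y. if P y then [f y] else []) ys) = map f (filter P ys)"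
  by (induction ys) auto

lemma edge_list_eq_filter_product:
  "edge_list n \<Phi> = filter (\<lambda>(i, j). i < j \<and> \<Phi> i j \<noteq> 0) (List.product [0..<n] [0..<n])"
  unfolding edge_list_def product_concat_map filter_concat map_map comp_def concat_map_if_singleton
  by (simp add: filter_map comp_def)

lemma distinct_edge_list: "distinct (edge_list n \<Phi>)"
  unfolding edge_list_eq_filter_product by (simp add: distinct_product)

lemma set_edge_list: "set (edge_list n \<Phi>) = edge_set n \<Phi>"
  by (auto simp: edge_list_def edge_set_def)

lemma nth_edge_list_in_edge_set: "c < length (edge_list n \<Phi>) \<Longrightarrow> edge_list n \<Phi> ! c \<in> edge_set n \<Phi>"
  using nth_mem set_edge_list by metis

lemma finite_edge_set: "finite (edge_set n \<Phi>)"
  by (rule finite_subset[of _ "{..<n} \<times> {..<n}"]) (auto simp: edge_set_def)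

lemma card_edge_set_le: "2 * card (edge_set n \<Phi>) \<le> n * n"
proof -
  let ?T = "{(i, j). i < j \<and> j < n}"
  let ?T' = "(\<lambda>(i, j). (j, i)) ` ?T"
  have finT: "finite ?T" by (rule finite_subset[of _ "{..<n} \<times> {..<n}"]) auto
  have "card ?T' = card ?T" by (rule card_image) (auto simp: inj_on_def)
  moreover have "?T \<inter> ?T' = {}" "?T \<union> ?T' \<subseteq> {..<n} \<times> {..<n}" by auto
  ultimately have "card ?T + card ?T \<le> n * n"
    using finT card_Un_disjoint[of ?T ?T'] card_mono[of "{..<n} \<times> {..<n}" "?T \<union> ?T'"]
    by (simp add: card_cartesian_product)
  moreover have "card (edge_set n \<Phi>) \<le> card ?T"
    using finT by (rule card_mono) (auto simp: edge_set_def)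
  ultimately show ?thesis by simp
qed

lemma sum_edge_list_nth:
  "(\<Sum>c<length (edge_list n \<Phi>). g (edge_list n \<Phi> ! c)) = (\<Sum>e\<in>edge_set n \<Phi>. g e)"
proof -
  have "(\<Sum>c<length (edge_list n \<Phi>). g (edge_list n \<Phi> ! c)) = sum_list (map g (edge_list n \<Phi>))"
    by (simp add: sum_list_sum_nth lessThan_atLeast0)
  also have "\<dots> = (\<Sum>e\<in>edge_set n \<Phi>. g e)"
    using sum_list_distinct_conv_sum_set[OF distinct_edge_list] by (simp add: set_edge_list)
  finally show ?thesis .
qed

lemma sum_edge_set_eq_double_sum:
  "(\<Sum>e\<in>edge_set n \<Phi>. g e) = (\<Sum>a<n. \<Sum>b<n. if a < b \<and> \<Phi> a b \<noteq> 0 then g (a, b) else 0)"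
proof -
  have "(\<Sum>e\<in>edge_set n \<Phi>. g e) = (\<Sum>e\<in>{..<n} \<times> {..<n}. if e \<in> edge_set n \<Phi> then g e else 0)"
    by (subst sum.If_cases) (auto simp: edge_set_def intro!: sum.cong)
  also have "\<dots> = (\<Sum>a<n. \<Sum>b<n. if (a, b) \<in> edge_set n \<Phi> then g (a, b) else 0)"
    by (simp add: sum.cartesian_product)
  finally show ?thesis
    by (simp add: edge_set_def cong: if_cong)
qed

text \<open>For 0/1 weights the row of edge (a, b) is \<open>P\<^sub>a - P\<^sub>b\<close>, i.e. the matrix is \<open>F\<^sup>T P\<close>; when
  \<open>P\<close> is the pseudoinverse of the Laplacian \<open>F F\<^sup>T\<close> this is \<open>F\<^sup>\<dagger>\<close>.\<close>
definition edge_diff_mat :: "nat \<Rightarrow> (nat \<Rightarrow> nat \<Rightarrow> real) \<Rightarrow> (nat \<Rightarrow> nat \<Rightarrow> real) \<Rightarrow> real mat" where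
  "edge_diff_mat n \<Phi> P = mat (length (edge_list n \<Phi>)) n
     (\<lambda>(c, i). P (fst (edge_list n \<Phi> ! c)) i - P (snd (edge_list n \<Phi> ! c)) i)"

lemma incidence_mat_carrier: "incidence_mat n \<Phi> \<in> carrier_mat n (length (edge_list n \<Phi>))"
  by (simp add: incidence_mat_def Let_def)

lemma edge_diff_mat_carrier: "edge_diff_mat n \<Phi> P \<in> carrier_mat (length (edge_list n \<Phi>)) n"
  by (simp add: edge_diff_mat_def)

lemma incidence_mat_entry:
  assumes zero_one: "\<forall>i<n. \<forall>j<n. \<Phi> i j \<in> {0, 1}"
    and r: "r < n" and c: "c < length (edge_list n \<Phi>)"
  shows "incidence_mat n \<Phi> $$ (r, c) =
     (if r = fst (edge_list n \<Phi> ! c) then 1 else if r = snd (edge_list n \<Phi> ! c) then -1 else 0)"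
proof -
  obtain a b where ab: "edge_list n \<Phi> ! c = (a, b)" by fastforce
  then have "a < b" "b < n" "\<Phi> a b \<noteq> 0"
    using nth_edge_list_in_edge_set[OF c] by (auto simp: edge_set_def)
  moreover have "\<Phi> a b \<in> {0, 1}" using zero_one \<open>a < b\<close> \<open>b < n\<close> by simp
  ultimately have "\<Phi> a b = 1" by simp
  then show ?thesis using r c ab by (simp add: incidence_mat_def Let_def)
qed

lemma sum_incidence_mat_column:
  assumes zero_one: "\<forall>i<n. \<forall>j<n. \<Phi> i j \<in> {0, 1}" and c: "c < length (edge_list n \<Phi>)"
  shows "(\<Sum>j<n. incidence_mat n \<Phi> $$ (j, c) * x j) =
    x (fst (edge_list n \<Phi> ! c)) - x (snd (edge_list n \<Phi> ! c))"
proof -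
  obtain a b where ab: "edge_list n \<Phi> ! c = (a, b)" by fastforce
  then have "a < b" "b < n" using nth_edge_list_in_edge_set[OF c] by (auto simp: edge_set_def)
  then have "(\<Sum>j<n. incidence_mat n \<Phi> $$ (j, c) * x j) =
      (\<Sum>j<n. (if j = a then x j else 0) - (if j = b then x j else 0))"
    by (intro sum.cong refl) (auto simp: incidence_mat_entry[OF zero_one _ c] ab)
  then show ?thesis using \<open>a < b\<close> \<open>b < n\<close> by (simp add: sum_subtractf ab)
qed

text \<open>The right-hand side is \<open>(L P)\<^sub>i\<^sub>j\<close> for the Laplacian \<open>L = diag (\<Phi> 1) - \<Phi>\<close>.\<close>
lemma incidence_mat_mult_edge_diff_mat_entry:
  assumes zero_one: "\<forall>i<n. \<forall>j<n. \<Phi> i j \<in> {0, 1}" and sym: "\<forall>i<n. \<forall>j<n. \<Phi> i j = \<Phi> j i"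
    and i: "i < n" and j: "j < n"
  shows "(incidence_mat n \<Phi> * edge_diff_mat n \<Phi> P) $$ (i, j) = (\<Sum>t<n. \<Phi> i t * (P i j - P t j))"
proof -
  let ?es = "edge_list n \<Phi>"
  define h where "h a b = P a j - P b j" for a b
  define g where "g e = (if i = fst e then 1 else if i = snd e then -1 else 0) * h (fst e) (snd e)" for e
  have "(incidence_mat n \<Phi> * edge_diff_mat n \<Phi> P) $$ (i, j) =
      (\<Sum>c<length ?es. incidence_mat n \<Phi> $$ (i, c) * edge_diff_mat n \<Phi> P $$ (c, j))"
    using incidence_mat_carrier[of n \<Phi>] edge_diff_mat_carrier[of n \<Phi> P] i j
    by (simp add: scalar_prod_def lessThan_atLeast0)
  also have "\<dots> = (\<Sum>c<length ?es. g (?es ! c))"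
    by (intro sum.cong refl) (simp add: incidence_mat_entry[OF zero_one i] edge_diff_mat_def j g_def h_def)
  also have "\<dots> = (\<Sum>a<n. \<Sum>b<n. if a < b \<and> \<Phi> a b \<noteq> 0 then g (a, b) else 0)"
    by (simp add: sum_edge_list_nth sum_edge_set_eq_double_sum)
  also have "\<dots> = (\<Sum>a<n. \<Sum>b<n. (if a = i then (if i < b \<and> \<Phi> i b \<noteq> 0 then h i b else 0) else 0)
                       - (if b = i then (if a < i \<and> \<Phi> a i \<noteq> 0 then h a i else 0) else 0))"
    by (intro sum.cong refl) (auto simp: g_def)
  also have "\<dots> = (\<Sum>t<n. (if i < t \<and> \<Phi> i t \<noteq> 0 then h i t else 0)
                         - (if t < i \<and> \<Phi> t i \<noteq> 0 then h t i else 0))"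
  proof -
    have "(\<Sum>a<n. \<Sum>b<n. if a = i then f b else 0) = (\<Sum>b<n. f b)" for f :: "nat \<Rightarrow> real"
      using i by (subst sum.swap) simp
    moreover have "(\<Sum>a<n. \<Sum>b<n. if b = i then f a else 0) = (\<Sum>a<n. f a)" for f :: "nat \<Rightarrow> real"
      using i by simp
    ultimately show ?thesis by (simp add: sum_subtractf)
  qed
  also have "\<dots> = (\<Sum>t<n. \<Phi> i t * (P i j - P t j))"
  proof (intro sum.cong refl)
    fix t assume "t \<in> {..<n}"
    then have "\<Phi> i t = \<Phi> t i" "\<Phi> i t \<in> {0, 1}" using sym zero_one i by auto
    then show "(if i < t \<and> \<Phi> i t \<noteq> 0 then h i t else 0) - (if t < i \<and> \<Phi> t i \<noteq> 0 then h t i else 0) =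
       \<Phi> i t * (P i j - P t j)"
      by (cases "i < t"; cases "t < i"; auto simp: h_def)
  qed
  finally show ?thesis .
qed

lemma edge_diff_mat_mult_incidence_mat_entry:
  assumes zero_one: "\<forall>i<n. \<forall>j<n. \<Phi> i j \<in> {0, 1}"
    and c: "c < length (edge_list n \<Phi>)" and d: "d < length (edge_list n \<Phi>)"
  shows "(edge_diff_mat n \<Phi> P * incidence_mat n \<Phi>) $$ (c, d) =
    (let (a, b) = edge_list n \<Phi> ! c; (a', b') = edge_list n \<Phi> ! d in
       P a a' - P b a' - (P a b' - P b b'))"
proof -
  have "(edge_diff_mat n \<Phi> P * incidence_mat n \<Phi>) $$ (c, d) =
      (\<Sum>j<n. incidence_mat n \<Phi> $$ (j, d) * edge_diff_mat n \<Phi> P $$ (c, j))"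
    using c d incidence_mat_carrier[of n \<Phi>] edge_diff_mat_carrier[of n \<Phi> P]
    by (simp add: scalar_prod_def lessThan_atLeast0 mult.commute)
  also have "\<dots> = edge_diff_mat n \<Phi> P $$ (c, fst (edge_list n \<Phi> ! d))
      - edge_diff_mat n \<Phi> P $$ (c, snd (edge_list n \<Phi> ! d))"
    by (rule sum_incidence_mat_column[OF zero_one d])
  finally show ?thesis
    using c nth_edge_list_in_edge_set[OF d]
    by (auto simp: edge_diff_mat_def edge_set_def split: prod.splits)
qed

definition centering_mat :: "nat \<Rightarrow> real mat" where
  "centering_mat n = mat n n (\<lambda>(i, j). (if i = j then 1 else 0) - 1 / real n)"

lemma centering_mat_mult:
  assumes A: "A \<in> carrier_mat n c" and col_sums: "\<forall>j<c. (\<Sum>i<n. A $$ (i, j)) = 0"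
  shows "centering_mat n * A = A"
proof (rule eq_matI)
  fix i j assume "i < dim_row A" "j < dim_col A"
  then have ij: "i < n" "j < c" using A by auto
  have "(centering_mat n * A) $$ (i, j) = (\<Sum>t<n. (if t = i then A $$ (t, j) else 0) - A $$ (t, j) / real n)"
    using A ij by (auto simp: centering_mat_def scalar_prod_def lessThan_atLeast0 algebra_simps intro!: sum.cong)
  also have "\<dots> = A $$ (i, j) - (\<Sum>t<n. A $$ (t, j)) / real n"
    using ij by (simp only: sum_subtractf sum_divide_distrib) simp
  finally show "(centering_mat n * A) $$ (i, j) = A $$ (i, j)" using col_sums ij by simp
qed (use A in \<open>auto simp: centering_mat_def\<close>)

lemma mult_centering_mat:
  assumes A: "A \<in> carrier_mat r n" and row_sums: "\<forall>i<r. (\<Sum>j<n. A $$ (i, j)) = 0"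
  shows "A * centering_mat n = A"
proof (rule eq_matI)
  fix i j assume "i < dim_row A" "j < dim_col A"
  then have ij: "i < r" "j < n" using A by auto
  have "(A * centering_mat n) $$ (i, j) = (\<Sum>t<n. (if t = j then A $$ (i, t) else 0) - A $$ (i, t) / real n)"
    using A ij by (auto simp: centering_mat_def scalar_prod_def lessThan_atLeast0 algebra_simps intro!: sum.cong)
  also have "\<dots> = A $$ (i, j) - (\<Sum>t<n. A $$ (i, t)) / real n"
    using ij by (simp only: sum_subtractf sum_divide_distrib) simp
  finally show "(A * centering_mat n) $$ (i, j) = A $$ (i, j)" using row_sums ij by simp
qed (use A in \<open>auto simp: centering_mat_def\<close>)

lemma incidence_mat_mult_edge_diff_mat:
  assumes zero_one: "\<forall>i<n. \<forall>j<n. \<Phi> i j \<in> {0, 1}" and sym: "\<forall>i<n. \<forall>j<n. \<Phi> i j = \<Phi> j i"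
    and laplacian_P: "\<forall>i<n. \<forall>j<n. (\<Sum>t<n. \<Phi> i t * (P i j - P t j)) = (if i = j then 1 else 0) - 1 / real n"
  shows "incidence_mat n \<Phi> * edge_diff_mat n \<Phi> P = centering_mat n"
proof (rule eq_matI)
  fix i j assume "i < dim_row (centering_mat n)" "j < dim_col (centering_mat n)"
  then show "(incidence_mat n \<Phi> * edge_diff_mat n \<Phi> P) $$ (i, j) = centering_mat n $$ (i, j)"
    using incidence_mat_mult_edge_diff_mat_entry[OF zero_one sym, of i j P] laplacian_P
    by (simp add: centering_mat_def)
qed (simp_all add: centering_mat_def edge_diff_mat_def incidence_mat_def Let_def)

lemma edge_diff_mat_mult_incidence_mat_symmetric:
  assumes zero_one: "\<forall>i<n. \<forall>j<n. \<Phi> i j \<in> {0, 1}" and P_sym: "\<forall>i<n. \<forall>j<n. P i j = P j i"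
  shows "transpose_mat (edge_diff_mat n \<Phi> P * incidence_mat n \<Phi>) = edge_diff_mat n \<Phi> P * incidence_mat n \<Phi>"
proof (rule eq_matI)
  let ?L = "length (edge_list n \<Phi>)"
  fix c d assume "c < dim_row (edge_diff_mat n \<Phi> P * incidence_mat n \<Phi>)"
    "d < dim_col (edge_diff_mat n \<Phi> P * incidence_mat n \<Phi>)"
  then have cd: "c < ?L" "d < ?L" using incidence_mat_carrier[of n \<Phi>] by (auto simp: edge_diff_mat_def)
  obtain a b a' b' where ab: "edge_list n \<Phi> ! c = (a, b)" "edge_list n \<Phi> ! d = (a', b')"
    by fastforce
  then have "a < n" "b < n" "a' < n" "b' < n"
    using nth_edge_list_in_edge_set[OF cd(1)] nth_edge_list_in_edge_set[OF cd(2)]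
    by (auto simp: edge_set_def)
  then show "transpose_mat (edge_diff_mat n \<Phi> P * incidence_mat n \<Phi>) $$ (c, d)
      = (edge_diff_mat n \<Phi> P * incidence_mat n \<Phi>) $$ (c, d)"
    using cd P_sym ab edge_diff_mat_mult_incidence_mat_entry[OF zero_one cd]
      edge_diff_mat_mult_incidence_mat_entry[OF zero_one cd(2) cd(1)] incidence_mat_carrier[of n \<Phi>]
    by (simp add: edge_diff_mat_def)
qed (simp_all add: edge_diff_mat_def incidence_mat_def Let_def)

lemma pseudo_inverse_incidence_mat:
  assumes zero_one: "\<forall>i<n. \<forall>j<n. \<Phi> i j \<in> {0, 1}" and sym: "\<forall>i<n. \<forall>j<n. \<Phi> i j = \<Phi> j i"
    and P_sym: "\<forall>i<n. \<forall>j<n. P i j = P j i"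
    and P_row: "\<forall>i<n. (\<Sum>j<n. P i j) = 0"
    and laplacian_P: "\<forall>i<n. \<forall>j<n. (\<Sum>t<n. \<Phi> i t * (P i j - P t j)) = (if i = j then 1 else 0) - 1 / real n"
  shows "pseudo_inverse (incidence_mat n \<Phi>) = edge_diff_mat n \<Phi> P"
proof (rule pseudo_inverse_eqI)
  let ?F = "incidence_mat n \<Phi>" and ?R = "edge_diff_mat n \<Phi> P"
  show F: "?F \<in> carrier_mat n (length (edge_list n \<Phi>))" by (rule incidence_mat_carrier)
  show R: "?R \<in> carrier_mat (length (edge_list n \<Phi>)) n" by (rule edge_diff_mat_carrier)
  have FR: "?F * ?R = centering_mat n"
    by (rule incidence_mat_mult_edge_diff_mat[OF zero_one sym laplacian_P])
  have "\<forall>j<length (edge_list n \<Phi>). (\<Sum>i<n. ?F $$ (i, j)) = 0"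
    using sum_incidence_mat_column[OF zero_one, of _ "\<lambda>_. 1"] by simp
  then show "?F * ?R * ?F = ?F" unfolding FR by (rule centering_mat_mult[OF F])
  have "(\<Sum>i<n. ?R $$ (c, i)) = 0" if c: "c < length (edge_list n \<Phi>)" for c
  proof -
    have "fst (edge_list n \<Phi> ! c) < n" "snd (edge_list n \<Phi> ! c) < n"
      using nth_edge_list_in_edge_set[OF c] by (auto simp: edge_set_def split: prod.splits)
    then show ?thesis using P_row c by (simp add: edge_diff_mat_def sum_subtractf)
  qed
  then show "?R * ?F * ?R = ?R"
    using F R by (simp add: assoc_mult_mat[OF R F R] FR mult_centering_mat)
  show "transpose_mat (?F * ?R) = ?F * ?R"
    unfolding FR by (rule eq_matI) (auto simp: centering_mat_def)
  show "transpose_mat (?R * ?F) = ?R * ?F"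
    by (rule edge_diff_mat_mult_incidence_mat_symmetric[OF zero_one P_sym])
qed

lemma edge_diff_mat_mult_entry:
  assumes "c < length (edge_list n \<Phi>)" "l < p"
  shows "(edge_diff_mat n \<Phi> P * mat n p (\<lambda>(i, l). Z i l)) $$ (c, l) =
    (\<Sum>i<n. (P (fst (edge_list n \<Phi> ! c)) i - P (snd (edge_list n \<Phi> ! c)) i) * Z i l)"
  using assms by (simp add: edge_diff_mat_def scalar_prod_def lessThan_atLeast0)

lemma max_norm_le_iff:
  fixes A :: "real mat" assumes "T \<ge> 0"
  shows "max_norm A \<le> T \<longleftrightarrow> (\<forall>i<dim_row A. \<forall>j<dim_col A. \<bar>A $$ (i, j)\<bar> \<le> T)"
proof -
  have "{\<bar>A $$ (i, j)\<bar> | i j. i < dim_row A \<and> j < dim_col A}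
      \<subseteq> (\<lambda>(i, j). \<bar>A $$ (i, j)\<bar>) ` ({..<dim_row A} \<times> {..<dim_col A})" by auto
  then have "finite {\<bar>A $$ (i, j)\<bar> | i j. i < dim_row A \<and> j < dim_col A}"
    by (rule finite_subset) auto
  then show ?thesis
    using assms unfolding max_norm_def by (subst Max_le_iff) auto
qed

section \<open>The Laplacian of the two-cluster graph\<close>

lemma sum_lessThan_double:
  fixes m :: nat
  shows "(\<Sum>t<2 * m. f t) = (\<Sum>q<m. f q) + (\<Sum>q<m. f (q + m))"
proof -
  have "(\<Sum>t<2 * m. f t) = (\<Sum>t = 0..<m. f t) + (\<Sum>t = m..<2 * m. f t)"
    by (subst sum.atLeastLessThan_concat) (auto simp: lessThan_atLeast0)
  also have "(\<Sum>t = m..<2 * m. f t) = (\<Sum>q = 0..<m. f (q + m))"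
    using sum.shift_bounds_nat_ivl[of f 0 m m] by (simp add: mult_2)
  finally show ?thesis by (simp add: lessThan_atLeast0)
qed

text \<open>In the next two bounds \<open>u\<^sub>1, u\<^sub>2\<close> are the two values of \<open>u\<close>, \<open>g = \<gamma>\<close> and
  \<open>U = \<Sum> u\<^sup>2\<close> for the two-cluster graph below; they control pairs in one cluster and cross edges.\<close>

lemma within_bound_poly:
  fixes m k :: real assumes m: "3 \<le> m" and k1: "1 \<le> k" and km: "k \<le> m"
  shows "18*k^2*(m+2)^2 + 6*k^2*m^2 + 48*(m+1)*k + 6*k*m^2 + 6*(m-k)*(m+2)^2
    \<le> 4*m^3*(m+2)^2 + 16*k^2*(m+2)^2"
proof -
  have kk: "k*k \<le> m*m" using k1 km by (intro mult_mono) auto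
  have p2: "(m+2)*(m+2) \<ge> 0" by simp
  have "2*(k*k)*((m+2)*(m+2)) \<le> 2*(m*m)*((m+2)*(m+2))" using kk p2 by (intro mult_right_mono) auto
  moreover have "6*(k*k)*(m*m) \<le> 6*(m*m)*(m*m)" using kk by (intro mult_right_mono) auto
  moreover have "48*(m+1)*k \<le> 48*(m+1)*m" using km m by (intro mult_left_mono) auto
  moreover have "6*k*(m*m) \<le> 6*m*(m*m)" using km by (intro mult_right_mono) auto
  moreover have "6*(m-k)*((m+2)*(m+2)) \<le> 6*(m-1)*((m+2)*(m+2))" using k1 p2 by (intro mult_right_mono) auto
  moreover obtain d where d: "m = 3 + d" "d \<ge> 0" using m by (metis add.commute diff_add_cancel diff_ge_0_iff_ge)
  then have "4*(m*m*m)*((m+2)*(m+2)) - (2*(m*m)*((m+2)*(m+2)) + 6*(m*m)*(m*m) + 48*(m+1)*m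
        + 6*m*(m*m) + 6*(m-1)*((m+2)*(m+2)))
      = 726 + 1884*d + 1402*(d*d) + 452*(d*d*d) + 68*(d*d*d*d) + 4*(d*d*d*d*d)"
    by (simp add: algebra_simps)
  moreover have "\<dots> \<ge> 0" using d(2) by simp
  ultimately show ?thesis by (simp add: algebra_simps power2_eq_square power3_eq_cube)
qed

lemma within_bound_arith:
  fixes m k :: real assumes m: "3 \<le> m" and k1: "1 \<le> k" and km: "k \<le> m"
  defines "u1 \<equiv> 1 / (m+2)" and "u2 \<equiv> 1 / m" and "g \<equiv> 2*k / (m*(m+2))"
    and "U \<equiv> k / (m+2)^2 + (m-k) / m^2"
  shows "6*(2/m^2 + u1^2 + u2^2 + 2*(u1^2-u2^2)*(u1-u2)/g + (u1-u2)^2*U/g^2) \<le> 4*m/k^2 + 16/m^2"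
proof -
  have pos: "m > 0" "k > 0" "m + 2 > 0" using m k1 by auto
  obtain p where p: "p = m + 2" by simp
  have pp: "p > 0" using p pos by simp
  have "4*m/k^2 + 16/m^2 - 6*(2/m^2 + u1^2 + u2^2 + 2*(u1^2-u2^2)*(u1-u2)/g + (u1-u2)^2*U/g^2)
     = (4*m^3*(m+2)^2 + 16*k^2*(m+2)^2 - (18*k^2*(m+2)^2 + 6*k^2*m^2 + 48*(m+1)*k + 6*k*m^2 + 6*(m-k)*(m+2)^2))
       / (k^2*m^2*(m+2)^2)"
    unfolding u1_def u2_def g_def U_def p[symmetric]
    using pos pp by (simp add: field_simps power2_eq_square power3_eq_cube) (simp add: p algebra_simps)
  also have "\<dots> \<ge> 0" using within_bound_poly[OF m k1 km] pos by simp
  finally show ?thesis by simp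
qed

lemma cross_bound_arith:
  fixes m k :: real assumes m: "3 \<le> m" and k1: "1 \<le> k" and km: "k \<le> m"
  defines "u \<equiv> 1 / (m+2)" and "g \<equiv> 2*k / (m*(m+2))"
    and "U \<equiv> k / (m+2)^2 + (m-k) / m^2"
  shows "16*(u^2 + 2*u*(u/g)*u + (u/g)^2*U) \<le> 4*m/k^2 + 16/m^2"
proof -
  have pos: "m > 0" "k > 0" "m + 2 > 0" using m k1 by auto
  obtain p where p: "p = m + 2" by simp
  have pp: "p > 0" using p pos by simp
  have "16*(u^2 + 2*u*(u/g)*u + (u/g)^2*U) = 4*m/k^2 + 16/(m+2)^2 - 16/(k*(m+2)^2)"
    unfolding u_def g_def U_def p[symmetric]
    using pos pp by (simp add: field_simps power2_eq_square power3_eq_cube) (simp add: p algebra_simps)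
  also have "\<dots> \<le> 4*m/k^2 + 16/m^2"
  proof -
    have "16/(m+2)^2 \<le> 16/m^2" using pos by (intro divide_left_mono power_mono) auto
    moreover have "16/(k*(m+2)^2) \<ge> 0" using pos by simp
    ultimately show ?thesis by linarith
  qed
  finally show ?thesis .
qed

locale two_cluster_graph =
  fixes m k :: nat and S :: "nat set"
  assumes S_subset: "S \<subseteq> {..<m}" and card_S: "card S = k"
    and k_pos: "1 \<le> k" and k_le: "k \<le> m" and m_ge: "3 \<le> m"
begin

definition adj :: "nat \<Rightarrow> nat \<Rightarrow> real" where
  "adj i j = (if (i \<noteq> j \<and> (i < m) = (j < m)) \<or> (i \<in> S \<and> j = i + m) \<or> (j \<in> S \<and> i = j + m)
     then 1 else 0)"

definition slot :: "nat \<Rightarrow> nat" where "slot i = (if i < m then i else i - m)"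
definition side :: "nat \<Rightarrow> real" where "side i = (if i < m then 1 else -1)"
definition partner :: "nat \<Rightarrow> nat" where "partner i = (if i < m then i + m else i - m)"

definition u :: "nat \<Rightarrow> real" where "u q = (if q \<in> S then 1 / (real m + 2) else 1 / real m)"
definition \<gamma> :: real where "\<gamma> = 2 * real k / (real m * (real m + 2))"

definition sym_pinv :: "nat \<Rightarrow> nat \<Rightarrow> real" where
  "sym_pinv q r = ((if q = r then 1 else 0) - 1 / real m) / real m"

definition anti_inv :: "nat \<Rightarrow> nat \<Rightarrow> real" where
  "anti_inv q r = u q * ((if q = r then 1 else 0) + u r / \<gamma>)"

text \<open>In the coordinates \<open>x\<^sub>q = y\<^sub>q + z\<^sub>q\<close>, \<open>x\<^sub>q\<^sub>+\<^sub>m = y\<^sub>q - z\<^sub>q\<close> the Laplacian acts as \<open>m I - J\<close>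
  on \<open>y\<close> and as \<open>diag (1 / u) - J\<close> on \<open>z\<close> (a cross edge at \<open>q\<close> adds 2 to the diagonal).
  \<open>sym_pinv\<close> is the pseudoinverse of the first block and \<open>anti_inv\<close> the Sherman--Morrison
  inverse of the second, using \<open>\<Sum> u = 1 - \<gamma>\<close>.\<close>
definition lap_pinv :: "nat \<Rightarrow> nat \<Rightarrow> real" where
  "lap_pinv i j = (sym_pinv (slot i) (slot j) + side i * side j * anti_inv (slot i) (slot j)) / 2"

lemma m_pos: "real m > 0"
  using m_ge by simp

lemma \<gamma>_pos: "\<gamma> > 0"
  using k_pos m_ge by (simp add: \<gamma>_def)

lemma u_pos: "u q > 0"
  using m_ge by (simp add: u_def)

lemma sum_if_in_S: "(\<Sum>q<m. if q \<in> S then x else y) = real k * x + (real m - real k) * y"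
proof -
  have "finite S" using S_subset finite_subset by blast
  then have "card ({..<m} - S) = m - k" using S_subset card_S by (simp add: card_Diff_subset)
  moreover have "{..<m} \<inter> S = S" "{..<m} \<inter> - S = {..<m} - S" using S_subset by auto
  ultimately show ?thesis using card_S k_le by (simp add: sum.If_cases of_nat_diff)
qed

lemma sum_u: "(\<Sum>q<m. u q) = 1 - \<gamma>"
proof -
  have "(\<Sum>q<m. u q) = real k / (real m + 2) + (real m - real k) / real m"
    by (simp add: u_def sum_if_in_S)
  also have "\<dots> = 1 - \<gamma>"
  proof -
    have "real m * real m + real m * 2 > 0" using m_pos by (simp add: add_pos_pos)
    then show ?thesis
      using m_pos by (simp add: \<gamma>_def field_simps add_divide_distrib[symmetric])
  qed
  finally show ?thesis .
qed

lemma sym_pinv_commute: "sym_pinv q r = sym_pinv r q"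
  by (auto simp: sym_pinv_def)

lemma sum_sym_pinv: "r < m \<Longrightarrow> (\<Sum>q<m. sym_pinv q r) = 0"
proof -
  assume r: "r < m"
  have "(\<Sum>q<m. sym_pinv q r) = ((\<Sum>q<m. if q = r then 1 else 0) - real m * (1 / real m)) / real m"
    by (simp add: sym_pinv_def sum_subtractf flip: sum_divide_distrib)
  then show ?thesis using r m_pos by simp
qed

lemma sum_anti_inv: "r < m \<Longrightarrow> (\<Sum>q<m. anti_inv q r) = u r / \<gamma>"
proof -
  assume r: "r < m"
  have "anti_inv q r = (if q = r then u q else 0) + u q * u r / \<gamma>" for q
    by (simp add: anti_inv_def distrib_left)
  then have "(\<Sum>q<m. anti_inv q r) = u r + (\<Sum>q<m. u q) * u r / \<gamma>"
    using r by (simp add: sum.distrib sum_distrib_right sum_divide_distrib)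
  also have "\<dots> = u r / \<gamma>"
    using \<gamma>_pos by (simp add: sum_u field_simps)
  finally show ?thesis .
qed

lemma lap_pinv_sym: "lap_pinv i j = lap_pinv j i"
  by (simp add: lap_pinv_def sym_pinv_commute anti_inv_def mult.commute)

lemma lap_pinv_row_sum: "i < 2 * m \<Longrightarrow> (\<Sum>j<2 * m. lap_pinv i j) = 0"
proof -
  assume i: "i < 2 * m"
  have "(\<Sum>j<2 * m. lap_pinv i j) = (\<Sum>q<m. lap_pinv i q + lap_pinv i (q + m))"
    by (simp add: sum_lessThan_double sum.distrib)
  also have "\<dots> = (\<Sum>q<m. sym_pinv (slot i) q)"
    by (intro sum.cong refl) (simp add: lap_pinv_def slot_def side_def field_simps)
  also have "\<dots> = 0"
    using i sum_sym_pinv[of "slot i"] by (auto simp: slot_def sym_pinv_commute)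
  finally show ?thesis .
qed

lemma sum_same_side:
  "(\<Sum>t<2 * m. if (t < m) = (i < m) then f t else 0) = (\<Sum>q<m. f (if i < m then q else q + m))"
  by (cases "i < m") (simp_all add: sum_lessThan_double)

lemma sum_lap_pinv_same_side:
  assumes j: "j < 2 * m"
  shows "(\<Sum>q<m. lap_pinv (if i < m then q else q + m) j) = side i * side j * u (slot j) / \<gamma> / 2"
proof -
  have sj: "slot j < m" using j by (auto simp: slot_def)
  have "(\<Sum>q<m. lap_pinv (if i < m then q else q + m) j) =
      (\<Sum>q<m. sym_pinv q (slot j) / 2 + side i * side j / 2 * anti_inv q (slot j))"
    by (intro sum.cong refl) (simp add: lap_pinv_def slot_def side_def)
  also have "\<dots> = (\<Sum>q<m. sym_pinv q (slot j)) / 2 + side i * side j / 2 * (\<Sum>q<m. anti_inv q (slot j))"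
    by (simp add: sum.distrib sum_distrib_left sum_divide_distrib)
  also have "\<dots> = side i * side j * u (slot j) / \<gamma> / 2"
    using sj by (simp add: sum_sym_pinv sum_anti_inv)
  finally show ?thesis .
qed

lemma adj_eq:
  assumes "i < 2 * m" "t < 2 * m"
  shows "adj i t = (if (t < m) = (i < m) then 1 else 0) - (if t = i then 1 else 0)
                    + (if t = partner i then (if slot i \<in> S then 1 else 0) else 0)"
  using assms S_subset by (auto simp: adj_def slot_def partner_def)

lemma laplacian_lap_pinv:
  assumes i: "i < 2 * m" and j: "j < 2 * m"
  shows "(\<Sum>t<2 * m. adj i t * (lap_pinv i j - lap_pinv t j)) = (if i = j then 1 else 0) - 1 / real (2 * m)"
proof -
  define D where "D t = lap_pinv i j - lap_pinv t j" for t
  define A where "A = anti_inv (slot i) (slot j)"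
  define \<epsilon> where "\<epsilon> = side i * side j"
  have partner: "partner i < 2 * m" "slot (partner i) = slot i" "side (partner i) = - side i"
    using i by (auto simp: partner_def slot_def side_def)
  have lap_pinv_ij: "lap_pinv i j = (sym_pinv (slot i) (slot j) + \<epsilon> * A) / 2"
    by (simp add: lap_pinv_def \<epsilon>_def A_def)
  have D_partner: "D (partner i) = \<epsilon> * A"
    using partner by (simp add: D_def lap_pinv_def A_def \<epsilon>_def field_simps)
  have cross_edge: "(if slot i \<in> S then 1 else 0) = (1 / u (slot i) - real m) / 2"
    by (simp add: u_def)
  have "(\<Sum>t<2 * m. adj i t * D t) =
      (\<Sum>t<2 * m. (if (t < m) = (i < m) then D t else 0) - (if t = i then D t else 0)
                + (if t = partner i then (if slot i \<in> S then D t else 0) else 0))"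
    by (intro sum.cong refl) (auto simp: adj_eq i)
  also have "\<dots> = (\<Sum>q<m. D (if i < m then q else q + m)) + (if slot i \<in> S then 1 else 0) * D (partner i)"
    using i partner by (simp add: sum.distrib sum_subtractf sum_same_side D_def)
  also have "(\<Sum>q<m. D (if i < m then q else q + m)) = real m * lap_pinv i j - \<epsilon> * u (slot j) / \<gamma> / 2"
    by (simp add: D_def sum_subtractf sum_lap_pinv_same_side[OF j] \<epsilon>_def)
  also have "real m * lap_pinv i j - \<epsilon> * u (slot j) / \<gamma> / 2 + (if slot i \<in> S then 1 else 0) * D (partner i)
      = (real m * sym_pinv (slot i) (slot j) + \<epsilon> * (A * (1 / u (slot i)) - u (slot j) / \<gamma>)) / 2"
    unfolding lap_pinv_ij D_partner cross_edge using u_pos[of "slot i"] by (simp add: field_simps)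
  also have "A * (1 / u (slot i)) = (if slot i = slot j then 1 else 0) + u (slot j) / \<gamma>"
    using u_pos[of "slot i"] by (simp add: A_def anti_inv_def)
  also have "real m * sym_pinv (slot i) (slot j) = (if slot i = slot j then 1 else 0) - 1 / real m"
    using m_pos by (simp add: sym_pinv_def)
  also have "((if slot i = slot j then 1 else 0) - 1 / real m
      + \<epsilon> * ((if slot i = slot j then 1 else 0) + u (slot j) / \<gamma> - u (slot j) / \<gamma>)) / 2
      = ((if slot i = slot j then 1 + \<epsilon> else 0) - 1 / real m) / 2"
    by simp
  also have "(if slot i = slot j then 1 + \<epsilon> else 0) = (if i = j then 2 else 0)"
    using i j by (auto simp: slot_def side_def \<epsilon>_def)
  finally show ?thesis by (auto simp: D_def field_simps)
qed

lemma sum_sq_u: "(\<Sum>q<m. (u q)^2) = real k / (real m + 2)^2 + (real m - real k) / (real m)^2"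
proof -
  have "(u q)^2 = (if q \<in> S then 1 / (real m + 2)^2 else 1 / (real m)^2)" for q
    by (simp add: u_def power_divide)
  then show ?thesis by (simp add: sum_if_in_S)
qed

lemma sum_sq_two_points:
  assumes a: "a < m" and b: "b < m"
  shows "(\<Sum>q<m. ((if q = a then x else 0) + (if q = b then y else 0) + z * u q)^2)
     = x^2 + y^2 + (if a = b then 2*x*y else 0) + 2*x*z*u a + 2*y*z*u b + z^2 * (\<Sum>q<m. (u q)^2)"
proof -
  have "(\<Sum>q<m. ((if q = a then x else 0) + (if q = b then y else 0) + z * u q)^2)
      = (\<Sum>q<m. (if q = a then x*x + 2*x*z*u a else 0) + (if q = b then y*y + 2*y*z*u b else 0)
              + (if q = a then (if a = b then 2*x*y else 0) else 0) + z*z*(u q)^2)"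
    by (intro sum.cong refl) (auto simp: power2_eq_square algebra_simps)
  also have "\<dots> = x*x + 2*x*z*u a + (y*y + 2*y*z*u b) + (if a = b then 2*x*y else 0) + z*z*(\<Sum>q<m. (u q)^2)"
    using a b by (simp add: sum.distrib sum_distrib_left)
  finally show ?thesis by (simp add: power2_eq_square)
qed

lemma sum_sq_lap_pinv_diff:
  assumes a: "a < 2 * m" and b: "b < 2 * m"
  shows "(\<Sum>i<2 * m. (lap_pinv a i - lap_pinv b i)^2) =
    (\<Sum>q<m. (sym_pinv (slot a) q - sym_pinv (slot b) q)^2
       + (side a * anti_inv (slot a) q - side b * anti_inv (slot b) q)^2) / 2"
proof -
  have "(\<Sum>i<2 * m. (lap_pinv a i - lap_pinv b i)^2) =
      (\<Sum>q<m. (lap_pinv a q - lap_pinv b q)^2 + (lap_pinv a (q + m) - lap_pinv b (q + m))^2)"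
    by (simp add: sum_lessThan_double sum.distrib)
  also have "\<dots> = (\<Sum>q<m. ((sym_pinv (slot a) q - sym_pinv (slot b) q)^2
       + (side a * anti_inv (slot a) q - side b * anti_inv (slot b) q)^2) / 2)"
    by (intro sum.cong refl) (auto simp: lap_pinv_def slot_def side_def power2_eq_square field_simps)
  finally show ?thesis by (simp add: sum_divide_distrib)
qed

lemma sum_sq_sym_pinv_diff:
  assumes "a < m" "b < m" "a \<noteq> b"
  shows "(\<Sum>q<m. (sym_pinv a q - sym_pinv b q)^2) = 2 / (real m)^2"
proof -
  have "(\<Sum>q<m. (sym_pinv a q - sym_pinv b q)^2) =
      (\<Sum>q<m. ((if q = a then 1 / real m else 0) + (if q = b then - 1 / real m else 0) + 0 * u q)^2)"
    using assms by (intro sum.cong refl) (auto simp: sym_pinv_def field_simps)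
  also have "\<dots> = 2 / (real m)^2"
    using assms sum_sq_two_points[of a b "1 / real m" "- 1 / real m" 0] by (simp add: power2_eq_square)
  finally show ?thesis .
qed

lemma sum_sq_anti_inv_diff:
  assumes "a < m" "b < m" "a \<noteq> b"
  shows "(\<Sum>q<m. (anti_inv a q - anti_inv b q)^2) = (u a)^2 + (u b)^2
     + 2 * ((u a)^2 - (u b)^2) * (u a - u b) / \<gamma> + (u a - u b)^2 * (\<Sum>q<m. (u q)^2) / \<gamma>^2"
proof -
  define z where "z = (u a - u b) / \<gamma>"
  have "anti_inv a q - anti_inv b q = (if q = a then u a else 0) + (if q = b then - u b else 0) + z * u q" for q
    using assms \<gamma>_pos by (auto simp: anti_inv_def z_def field_simps)
  then have "(\<Sum>q<m. (anti_inv a q - anti_inv b q)^2) =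
      (u a)^2 + (u b)^2 + 2 * u a * z * u a - 2 * u b * z * u b + z^2 * (\<Sum>q<m. (u q)^2)"
    using assms sum_sq_two_points[of a b "u a" "- u b" z] by (simp add: power2_eq_square)
  moreover have "2 * u a * z * u a - 2 * u b * z * u b = 2 * ((u a)^2 - (u b)^2) * (u a - u b) / \<gamma>"
    using \<gamma>_pos by (simp add: z_def power2_eq_square field_simps)
  ultimately show ?thesis
    by (simp add: z_def power_divide)
qed

lemma sum_sq_anti_inv:
  assumes "a < m"
  shows "(\<Sum>q<m. (anti_inv a q)^2) =
    (u a)^2 + 2 * u a * (u a / \<gamma>) * u a + (u a / \<gamma>)^2 * (\<Sum>q<m. (u q)^2)"
proof -
  have "anti_inv a q = (if q = a then u a else 0) + (if q = a then 0 else 0) + (u a / \<gamma>) * u q" for q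
    using assms \<gamma>_pos by (auto simp: anti_inv_def field_simps)
  then show ?thesis
    using assms sum_sq_two_points[of a a "u a" 0 "u a / \<gamma>"] by (simp add: power2_eq_square)
qed

definition var_bound :: real where
  "var_bound = 4 * real m / (real k)^2 + 16 / (real m)^2"

lemma var_bound_pos: "var_bound > 0"
  using k_pos m_pos by (simp add: var_bound_def add_pos_pos)

lemma sum_sq_anti_inv_diff_bound:
  assumes "a < m" "b < m" "a \<noteq> b"
  shows "6 * (2 / (real m)^2 + (\<Sum>q<m. (anti_inv a q - anti_inv b q)^2)) \<le> var_bound"
proof -
  define W where "W v w = v^2 + w^2 + 2 * (v^2 - w^2) * (v - w) / \<gamma> + (v - w)^2 * (\<Sum>q<m. (u q)^2) / \<gamma>^2"
    for v w
  have "(\<Sum>q<m. (anti_inv a q - anti_inv b q)^2) = W (u a) (u b)"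
    using assms by (simp add: sum_sq_anti_inv_diff W_def)
  also have "6 * (2 / (real m)^2 + W (u a) (u b)) \<le> var_bound"
  proof (cases "u a = u b")
    case True
    have "u b \<le> 1 / real m" "0 \<le> u b" using m_pos by (auto simp: u_def frac_le)
    then have "W (u a) (u b) \<le> 2 * (1 / real m)^2" using True by (simp add: W_def power_mono)
    moreover have "8 / (real m)^2 \<le> 4 * real m / (real k)^2"
    proof -
      have "8 * (real k)^2 \<le> 8 * (real m)^2" using k_le by (simp add: power_mono)
      also have "\<dots> \<le> 4 * real m * (real m)^2" using m_ge by (intro mult_right_mono) auto
      finally show ?thesis using m_pos k_pos by (simp add: field_simps)
    qed
    ultimately show ?thesis by (simp add: var_bound_def power_divide)
  next
    case False
    have "W v w = W w v" for v w by (simp add: W_def power2_eq_square algebra_simps)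
    moreover have "{u a, u b} = {1 / (real m + 2), 1 / real m}"
      using False by (auto simp: u_def split: if_splits)
    ultimately have "W (u a) (u b) = W (1 / (real m + 2)) (1 / real m)"
      by (auto simp: doubleton_eq_iff)
    then show ?thesis
      using within_bound_arith[of "real m" "real k"] k_pos k_le m_ge
      by (simp add: W_def var_bound_def \<gamma>_def sum_sq_u)
  qed
  finally show ?thesis .
qed

lemma sum_sq_lap_pinv_diff_same_side:
  assumes a: "a < 2 * m" and b: "b < 2 * m" and same_side: "(a < m) = (b < m)" and "a \<noteq> b"
  shows "12 * (\<Sum>i<2 * m. (lap_pinv a i - lap_pinv b i)^2) \<le> var_bound"
proof -
  have slots: "slot a < m" "slot b < m" "slot a \<noteq> slot b"
    using assms by (auto simp: slot_def)
  have "side a = side b" using same_side by (simp add: side_def)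
  then have "(side a * anti_inv (slot a) q - side b * anti_inv (slot b) q)^2
      = (side b * side b) * (anti_inv (slot a) q - anti_inv (slot b) q)^2" for q
    by (simp add: power2_eq_square algebra_simps)
  moreover have "side b * side b = 1" by (simp add: side_def)
  ultimately have "(side a * anti_inv (slot a) q - side b * anti_inv (slot b) q)^2
      = (anti_inv (slot a) q - anti_inv (slot b) q)^2" for q
    by simp
  then have "12 * (\<Sum>i<2 * m. (lap_pinv a i - lap_pinv b i)^2)
      = 6 * (2 / (real m)^2 + (\<Sum>q<m. (anti_inv (slot a) q - anti_inv (slot b) q)^2))"
    using slots by (simp add: sum_sq_lap_pinv_diff[OF a b] sum.distrib sum_sq_sym_pinv_diff)
  also have "\<dots> \<le> var_bound"
    using slots by (rule sum_sq_anti_inv_diff_bound)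
  finally show ?thesis .
qed

lemma sum_sq_lap_pinv_diff_partner:
  assumes a: "a < m" and aS: "a \<in> S"
  shows "8 * (\<Sum>i<2 * m. (lap_pinv a i - lap_pinv (a + m) i)^2) \<le> var_bound"
proof -
  have "slot a = a" "slot (a + m) = a" "side a = 1" "side (a + m) = -1"
    using a by (auto simp: slot_def side_def)
  then have "(\<Sum>i<2 * m. (lap_pinv a i - lap_pinv (a + m) i)^2) = (\<Sum>q<m. 4 * (anti_inv a q)^2) / 2"
    using a sum_sq_lap_pinv_diff[of a "a + m"] by (simp add: power2_eq_square algebra_simps)
  then have "8 * (\<Sum>i<2 * m. (lap_pinv a i - lap_pinv (a + m) i)^2) = 16 * (\<Sum>q<m. (anti_inv a q)^2)"
    by (simp add: sum_distrib_left[symmetric])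
  also have "\<dots> \<le> var_bound"
    using cross_bound_arith[of "real m" "real k"] k_pos k_le m_ge aS
    unfolding sum_sq_anti_inv[OF a] sum_sq_u by (simp add: u_def var_bound_def \<gamma>_def)
  finally show ?thesis .
qed

end

section \<open>Tails of weighted sums of sub-Gaussian variables\<close>

lemma exp_le_one_plus_self_plus_sq:
  fixes y :: real assumes "y \<le> 1" shows "exp y \<le> 1 + y + y^2"
proof (cases "y \<ge> 0")
  case True then show ?thesis using exp_bound assms by blast
next
  case False
  have "exp (- y) \<ge> 1 - y" using exp_ge_add_one_self[of "-y"] by simp
  then have "exp y \<le> 1 / (1 - y)" using False by (simp add: exp_minus field_simps)
  also have "\<dots> \<le> 1 + y + y^2"
  proof -
    have "y^3 \<le> 0" using False by (simp add: power3_eq_cube mult_nonneg_nonpos)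
    then have "1 \<le> (1 - y) * (1 + y + y^2)"
      by (simp add: algebra_simps power2_eq_square power3_eq_cube)
    then show ?thesis using False by (simp add: field_simps)
  qed
  finally show ?thesis .
qed

lemma exp_le_self_plus_exp_sq:
  fixes y :: real shows "exp y \<le> y + exp (y^2)"
proof (cases "y \<le> 1")
  case True
  have "exp y \<le> 1 + y + y^2" by (rule exp_le_one_plus_self_plus_sq[OF True])
  also have "\<dots> \<le> y + exp (y^2)" using exp_ge_add_one_self[of "y^2"] by simp
  finally show ?thesis .
next
  case False
  then have "exp y \<le> exp (y^2)" by (simp add: power2_eq_square)
  then show ?thesis using False by linarith
qed

lemma exp_mult_le_psi2_small:
  fixes \<theta> x K :: real assumes K: "K > 0" and t: "\<theta>^2 * K^2 \<le> 1"
  shows "exp (\<theta> * x) \<le> \<theta> * x + (1 - \<theta>^2 * K^2) + \<theta>^2 * K^2 * exp (x^2 / K^2)"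
proof -
  define t where "t = \<theta>^2 * K^2"
  have "exp (\<theta> * x) \<le> \<theta> * x + exp ((1 - t) * 0 + t * (x^2 / K^2))"
    using exp_le_self_plus_exp_sq[of "\<theta> * x"] K by (simp add: t_def power_mult_distrib field_simps)
  also have "exp ((1 - t) * 0 + t * (x^2 / K^2)) \<le> (1 - t) * exp 0 + t * exp (x^2 / K^2)"
    using convex_onD[OF exp_convex, of t 0 "x^2 / K^2"] t by (simp add: t_def)
  finally show ?thesis by (simp add: t_def)
qed

lemma exp_mult_le_psi2_large:
  fixes \<theta> x K :: real assumes K: "K > 0"
  shows "exp (\<theta> * x) \<le> exp (\<theta>^2 * K^2 / 2) * ((1 + exp (x^2 / K^2)) / 2)"
proof -
  define z where "z = x^2 / K^2"
  have "0 \<le> (\<theta> * K - x / K)^2" by simp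
  also have "(\<theta> * K - x / K)^2 = \<theta>^2 * K^2 + z - 2 * (\<theta> * x)"
    using K by (simp add: z_def power2_eq_square field_simps)
  finally have "exp (\<theta> * x) \<le> exp (\<theta>^2 * K^2 / 2) * exp (z / 2)"
    by (simp add: exp_add[symmetric])
  also have "exp (z / 2) \<le> (1 + exp z) / 2"
  proof -
    have "exp z = exp (z / 2)^2" by (simp add: power2_eq_square exp_add[symmetric])
    moreover have "0 \<le> (exp (z / 2) - 1)^2" by simp
    ultimately show ?thesis by (simp add: power2_eq_square algebra_simps)
  qed
  finally show ?thesis by (simp add: z_def mult_left_mono)
qed

lemma psi2_integrable:
  assumes "X \<in> borel_measurable M" and psi2: "(\<integral>\<^sup>+\<omega>. ennreal (exp ((X \<omega>)^2 / K^2)) \<partial>M) \<le> 2"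
  shows "integrable M (\<lambda>\<omega>. exp ((X \<omega>)^2 / K^2))" and "(\<integral>\<omega>. exp ((X \<omega>)^2 / K^2) \<partial>M) \<le> 2"
proof -
  show int: "integrable M (\<lambda>\<omega>. exp ((X \<omega>)^2 / K^2))"
    using assms by (intro integrableI_bounded) (auto simp: order_le_less_trans)
  have "ennreal (\<integral>\<omega>. exp ((X \<omega>)^2 / K^2) \<partial>M) = (\<integral>\<^sup>+\<omega>. ennreal (exp ((X \<omega>)^2 / K^2)) \<partial>M)"
    using int by (intro nn_integral_eq_integral[symmetric]) auto
  then have "ennreal (\<integral>\<omega>. exp ((X \<omega>)^2 / K^2) \<partial>M) \<le> ennreal 2"
    using psi2 by simp
  then show "(\<integral>\<omega>. exp ((X \<omega>)^2 / K^2) \<partial>M) \<le> 2"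
    using ennreal_le_iff[of 2] by simp
qed

lemma nn_integral_le_integral:
  assumes "integrable M f" and "\<And>x. x \<in> space M \<Longrightarrow> 0 \<le> g x" and "\<And>x. x \<in> space M \<Longrightarrow> g x \<le> f x"
  shows "(\<integral>\<^sup>+x. ennreal (g x) \<partial>M) \<le> ennreal (\<integral>x. f x \<partial>M)"
proof -
  have "(\<integral>\<^sup>+x. ennreal (g x) \<partial>M) \<le> (\<integral>\<^sup>+x. ennreal (f x) \<partial>M)"
    using assms(3) by (intro nn_integral_mono) (simp add: ennreal_leI)
  also have "\<dots> = ennreal (\<integral>x. f x \<partial>M)"
    using assms by (intro nn_integral_eq_integral) (auto intro: order_trans)
  finally show ?thesis .
qed

lemma (in prob_space) psi2_mgf_bound:
  fixes X :: "'a \<Rightarrow> real"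
  assumes X: "integrable M X" and mean0: "expectation X = 0" and K: "K > 0"
    and psi2: "(\<integral>\<^sup>+\<omega>. ennreal (exp ((X \<omega>)^2 / K^2)) \<partial>M) \<le> 2"
  shows "(\<integral>\<^sup>+\<omega>. ennreal (exp (\<theta> * X \<omega>)) \<partial>M) \<le> ennreal (exp (\<theta>^2 * K^2))"
proof -
  define t where "t = \<theta>^2 * K^2"
  have t0: "t \<ge> 0" by (simp add: t_def)
  have "X \<in> borel_measurable M" using X by auto
  note psi2_int = psi2_integrable[OF this psi2]
  show ?thesis
  proof (cases "t \<le> 1")
    case True
    have "(\<integral>\<^sup>+\<omega>. ennreal (exp (\<theta> * X \<omega>)) \<partial>M)
        \<le> ennreal (\<integral>\<omega>. \<theta> * X \<omega> + (1 - t) + t * exp ((X \<omega>)^2 / K^2) \<partial>M)"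
      using X psi2_int(1) exp_mult_le_psi2_small[OF K True[unfolded t_def]]
      by (intro nn_integral_le_integral) (auto simp: t_def)
    also have "(\<integral>\<omega>. \<theta> * X \<omega> + (1 - t) + t * exp ((X \<omega>)^2 / K^2) \<partial>M)
        = (1 - t) + t * (\<integral>\<omega>. exp ((X \<omega>)^2 / K^2) \<partial>M)"
      using X psi2_int(1) mean0 by (simp add: prob_space)
    also have "\<dots> \<le> 1 + t" using mult_left_mono[OF psi2_int(2) t0] by linarith
    also have "1 + t \<le> exp t" by (rule exp_ge_add_one_self)
    finally show ?thesis by (simp add: t_def ennreal_leI)
  next
    case False
    have "(\<integral>\<^sup>+\<omega>. ennreal (exp (\<theta> * X \<omega>)) \<partial>M)
        \<le> ennreal (\<integral>\<omega>. exp (t / 2) * ((1 + exp ((X \<omega>)^2 / K^2)) / 2) \<partial>M)"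
      using psi2_int(1) exp_mult_le_psi2_large[OF K]
      by (intro nn_integral_le_integral) (auto simp: t_def)
    also have "(\<integral>\<omega>. exp (t / 2) * ((1 + exp ((X \<omega>)^2 / K^2)) / 2) \<partial>M)
        = exp (t / 2) * ((1 + (\<integral>\<omega>. exp ((X \<omega>)^2 / K^2) \<partial>M)) / 2)"
      using psi2_int(1) by (simp add: prob_space)
    also have "\<dots> \<le> exp (t / 2) * (1 + t / 2)"
      using psi2_int(2) False by (intro mult_left_mono) auto
    also have "\<dots> \<le> exp (t / 2) * exp (t / 2)"
      by (intro mult_left_mono exp_ge_add_one_self) auto
    also have "\<dots> = exp t" by (simp add: exp_add[symmetric])
    finally show ?thesis by (simp add: t_def ennreal_leI)
  qed
qed

lemma (in prob_space) weighted_sum_tail: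
  fixes X :: "nat \<Rightarrow> 'a \<Rightarrow> real" and r :: "nat \<Rightarrow> real"
  assumes I: "finite I" and indep: "indep_vars (\<lambda>_. borel) X I"
    and X: "\<And>i. i \<in> I \<Longrightarrow> integrable M (X i) \<and> expectation (X i) = 0 \<and>
               (\<integral>\<^sup>+\<omega>. ennreal (exp ((X i \<omega>)^2 / K^2)) \<partial>M) \<le> 2"
    and K: "K > 0" and r: "(\<Sum>i\<in>I. (r i)^2) \<le> \<rho>" and \<rho>: "\<rho> > 0" and a: "a > 0"
  shows "prob {\<omega> \<in> space M. a \<le> (\<Sum>i\<in>I. r i * X i \<omega>)} \<le> exp (- (a^2) / (4 * K^2 * \<rho>))"
proof -
  have [measurable]: "X i \<in> borel_measurable M" if "i \<in> I" for i
    using X[OF that] by auto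
  define \<theta> where "\<theta> = a / (2 * K^2 * \<rho>)"
  have \<theta>: "\<theta> > 0" using a K \<rho> by (simp add: \<theta>_def)
  have "emeasure M {\<omega> \<in> space M. a \<le> (\<Sum>i\<in>I. r i * X i \<omega>)} \<le>
      ennreal (exp (- \<theta> * a)) * (\<integral>\<^sup>+\<omega>. ennreal (exp (\<theta> * (\<Sum>i\<in>I. r i * X i \<omega>))) * indicator (space M) \<omega> \<partial>M)"
    by (intro Chernoff_ineq_nn_integral_ge \<theta>) auto
  also have "(\<integral>\<^sup>+\<omega>. ennreal (exp (\<theta> * (\<Sum>i\<in>I. r i * X i \<omega>))) * indicator (space M) \<omega> \<partial>M)
      = (\<integral>\<^sup>+\<omega>. (\<Prod>i\<in>I. ennreal (exp ((\<theta> * r i) * X i \<omega>))) \<partial>M)"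
    by (intro nn_integral_cong) (simp_all add: sum_distrib_left exp_sum I prod_ennreal mult_ac)
  also have "\<dots> = (\<Prod>i\<in>I. \<integral>\<^sup>+\<omega>. ennreal (exp ((\<theta> * r i) * X i \<omega>)) \<partial>M)"
    by (intro indep_vars_nn_integral I indep_vars_compose2[OF indep]) auto
  also have "ennreal (exp (- \<theta> * a)) * \<dots> \<le> ennreal (exp (- \<theta> * a)) * (\<Prod>i\<in>I. ennreal (exp ((\<theta> * r i)^2 * K^2)))"
    using X K by (intro mult_left_mono prod_mono_ennreal psi2_mgf_bound) auto
  also have "\<dots> = ennreal (exp (- \<theta> * a) * (\<Prod>i\<in>I. exp ((\<theta> * r i)^2 * K^2)))"
    by (simp add: prod_ennreal prod_nonneg flip: ennreal_mult)
  also have "exp (- \<theta> * a) * (\<Prod>i\<in>I. exp ((\<theta> * r i)^2 * K^2))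
      = exp (\<theta>^2 * K^2 * (\<Sum>i\<in>I. (r i)^2) - \<theta> * a)"
    by (simp add: exp_diff exp_minus exp_sum I sum_distrib_left power_mult_distrib mult_ac divide_inverse)
  also have "\<dots> \<le> ennreal (exp (\<theta>^2 * K^2 * \<rho> - \<theta> * a))"
    using r by (intro ennreal_leI exp_mono diff_right_mono mult_left_mono) auto
  also have "\<theta>^2 * K^2 * \<rho> - \<theta> * a = - (a^2) / (4 * K^2 * \<rho>)"
    using K \<rho> by (simp add: \<theta>_def field_simps power2_eq_square)
  finally show ?thesis by (simp add: emeasure_eq_measure)
qed

lemma (in prob_space) weighted_sum_abs_tail:
  fixes X :: "nat \<Rightarrow> 'a \<Rightarrow> real" and r :: "nat \<Rightarrow> real"
  assumes I: "finite I" and indep: "indep_vars (\<lambda>_. borel) X I"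
    and X: "\<And>i. i \<in> I \<Longrightarrow> integrable M (X i) \<and> expectation (X i) = 0 \<and>
               (\<integral>\<^sup>+\<omega>. ennreal (exp ((X i \<omega>)^2 / K^2)) \<partial>M) \<le> 2"
    and K: "K > 0" and r: "(\<Sum>i\<in>I. (r i)^2) \<le> \<rho>" and \<rho>: "\<rho> > 0" and a: "a > 0"
  shows "prob {\<omega> \<in> space M. a \<le> \<bar>\<Sum>i\<in>I. r i * X i \<omega>\<bar>} \<le> 2 * exp (- (a^2) / (4 * K^2 * \<rho>))"
proof -
  have [measurable]: "X i \<in> borel_measurable M" if "i \<in> I" for i
    using X[OF that] by auto
  have "{\<omega> \<in> space M. a \<le> \<bar>\<Sum>i\<in>I. r i * X i \<omega>\<bar>} =
        {\<omega> \<in> space M. a \<le> (\<Sum>i\<in>I. r i * X i \<omega>)} \<union> {\<omega> \<in> space M. a \<le> (\<Sum>i\<in>I. (- r i) * X i \<omega>)}"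
    by (auto simp: sum_negf abs_if)
  also have "prob \<dots> \<le> prob {\<omega> \<in> space M. a \<le> (\<Sum>i\<in>I. r i * X i \<omega>)}
      + prob {\<omega> \<in> space M. a \<le> (\<Sum>i\<in>I. (- r i) * X i \<omega>)}"
    by (intro measure_Un_le) auto
  also have "\<dots> \<le> exp (- (a^2) / (4 * K^2 * \<rho>)) + exp (- (a^2) / (4 * K^2 * \<rho>))"
    using r by (intro add_mono weighted_sum_tail[OF I indep X K _ \<rho> a]) auto
  finally show ?thesis by simp
qed

lemma (in finite_measure) measure_gt_le_of_ge:
  fixes f :: "'a \<Rightarrow> real"
  assumes [measurable]: "f \<in> borel_measurable M"
    and bound: "\<And>c. c > a \<Longrightarrow> measure M {x \<in> space M. c \<le> f x} \<le> B"
  shows "measure M {x \<in> space M. a < f x} \<le> B"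
proof -
  define A where "A j = {x \<in> space M. a + 1 / real (Suc j) \<le> f x}" for j
  have "incseq A"
  proof (rule incseq_SucI)
    fix j
    have "1 / real (Suc (Suc j)) \<le> 1 / real (Suc j)" by (simp add: frac_le)
    then show "A j \<subseteq> A (Suc j)" unfolding A_def by auto
  qed
  then have "(\<lambda>j. measure M (A j)) \<longlonglongrightarrow> measure M (\<Union>j. A j)"
    by (rule finite_Lim_measure_incseq[rotated]) (auto simp: A_def)
  moreover have "measure M (A j) \<le> B" for j
    unfolding A_def by (rule bound) simp
  ultimately have "measure M (\<Union>j. A j) \<le> B" by (intro LIMSEQ_le_const2) auto
  moreover have "(\<Union>j. A j) = {x \<in> space M. a < f x}"
  proof (intro equalityI subsetI)
    fix x assume "x \<in> (\<Union>j. A j)"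
    then obtain j where "x \<in> space M" and j: "a + 1 / real (Suc j) \<le> f x" unfolding A_def by blast
    moreover have "0 < 1 / real (Suc j)" by simp
    ultimately show "x \<in> {x \<in> space M. a < f x}" using j by (simp only: mem_Collect_eq) linarith
  next
    fix x assume x: "x \<in> {x \<in> space M. a < f x}"
    then obtain j where "inverse (real (Suc j)) < f x - a"
      using reals_Archimedean[of "f x - a"] by auto
    then have "a + 1 / real (Suc j) \<le> f x" by (simp add: inverse_eq_divide)
    then show "x \<in> (\<Union>j. A j)" using x unfolding A_def by blast
  qed
  ultimately show ?thesis by simp
qed

lemma subgaussian_norm_coord_INF_le:
  assumes l: "l < p"
  shows "(INF K \<in> {K. K > 0 \<and> (\<integral>\<^sup>+\<omega>. ennreal (exp ((Y \<omega> l)^2 / K^2)) \<partial>M) \<le> 2}. ereal K)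
    \<le> subgaussian_norm M p Y"
proof -
  define v where "v j = (if j = l then 1 else 0 :: real)" for j
  have "(\<Sum>j<p. (v j)\<^sup>2) = 1" using l by (simp add: v_def if_distrib[of "\<lambda>x. x^2"] cong: if_cong)
  moreover have "(\<Sum>j<p. v j * Y \<omega> j) = Y \<omega> l" for \<omega>
    using l by (simp add: v_def if_distrib[of "\<lambda>x. x * _"] cong: if_cong)
  ultimately show ?thesis
    unfolding subgaussian_norm_def by (intro SUP_upper2[of v]) auto
qed

lemma subgaussian_norm_nonneg: "0 < p \<Longrightarrow> 0 \<le> subgaussian_norm M p Y"
  using subgaussian_norm_coord_INF_le[where l=0 and Y=Y and M=M] by (rule order_trans[rotated]) (auto intro: INF_greatest)

lemma subgaussian_norm_coord_psi2:
  assumes Y: "subgaussian_norm M p Y \<le> ereal \<sigma>" and l: "l < p" and K: "K > \<sigma>"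
  shows "(\<integral>\<^sup>+\<omega>. ennreal (exp ((Y \<omega> l)^2 / K^2)) \<partial>M) \<le> 2"
proof -
  have "(INF K \<in> {K. K > 0 \<and> (\<integral>\<^sup>+\<omega>. ennreal (exp ((Y \<omega> l)^2 / K^2)) \<partial>M) \<le> 2}. ereal K) < ereal K"
    using subgaussian_norm_coord_INF_le[OF l, where Y=Y and M=M] Y K by (simp add: le_less_trans)
  then obtain K' where K': "K' > 0" "K' < K" and psi2: "(\<integral>\<^sup>+\<omega>. ennreal (exp ((Y \<omega> l)^2 / K'^2)) \<partial>M) \<le> 2"
    by (auto simp: INF_less_iff)
  have "(Y \<omega> l)^2 / K^2 \<le> (Y \<omega> l)^2 / K'^2" for \<omega>
    using K' by (intro divide_left_mono power_mono) auto
  then have "(\<integral>\<^sup>+\<omega>. ennreal (exp ((Y \<omega> l)^2 / K^2)) \<partial>M) \<le> (\<integral>\<^sup>+\<omega>. ennreal (exp ((Y \<omega> l)^2 / K'^2)) \<partial>M)"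
    by (intro nn_integral_mono ennreal_leI) simp
  then show ?thesis using psi2 by simp
qed

lemma exp_tail_le_power:
  fixes s B \<rho> N :: real
  assumes "4 * real j * \<rho> \<le> B" "ln N * B \<le> s^2" "\<rho> > 0" "B > 0" "N > 0"
  shows "exp (- (s^2) / (4 * \<rho>)) \<le> 1 / N^j"
proof -
  have "real j * ln N \<le> real j * (s^2 / B)"
    using assms by (intro mult_left_mono) (auto simp: field_simps)
  also have "\<dots> \<le> s^2 / (4 * \<rho>)"
  proof -
    have "(4 * real j * \<rho>) * s^2 \<le> B * s^2" using assms(1) by (intro mult_right_mono) auto
    then show ?thesis using assms by (simp add: field_simps)
  qed
  finally have "exp (- (s^2) / (4 * \<rho>)) \<le> exp (- (real j * ln N))" by simp
  also have "\<dots> = 1 / N^j"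
    using assms by (simp add: exp_minus exp_of_nat_mult inverse_eq_divide)
  finally show ?thesis .
qed

lemma sum_edge_set_vnorm_eq_0:
  assumes "\<forall>i<n. \<forall>j<n. \<forall>l<p. U i l = U j l"
  shows "(\<Sum>(i, j) \<in> edge_set n \<Phi>. sqrt (\<Phi> i j) * vnorm p (\<lambda>l. U i l - U j l)) = 0"
proof (intro sum.neutral ballI)
  fix e assume "e \<in> edge_set n \<Phi>"
  then obtain i j where e: "e = (i, j)" "i < n" "j < n" by (auto simp: edge_set_def)
  then have "\<forall>l<p. U i l = U j l" using assms by blast
  then have "vnorm p (\<lambda>l. U i l - U j l) = 0" by (simp add: vnorm_def)
  then show "(case e of (i, j) \<Rightarrow> sqrt (\<Phi> i j) * vnorm p (\<lambda>l. U i l - U j l)) = 0" using e by simp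
qed

text \<open>If \<open>c\<^sub>1 = c\<^sub>2\<close>, \<open>\<Phi>\<close> is the complete graph and the edge sum vanishes; that case is
  excluded here by \<open>centres_differ\<close>.\<close>
locale two_cluster_model = two_cluster_graph m k S + prob_space M
  for m k :: nat and S :: "nat set" and M :: "'a measure" +
  fixes n p :: nat and \<sigma> :: real and E :: "'a \<Rightarrow> nat \<Rightarrow> nat \<Rightarrow> real"
    and U :: "nat \<Rightarrow> nat \<Rightarrow> real" and c1 c2 :: "nat \<Rightarrow> real" and \<Phi> :: "nat \<Rightarrow> nat \<Rightarrow> real"
  assumes n_eq: "n = 2 * m" and p_pos: "1 \<le> p"
    and U1: "\<forall>i < m. \<forall>l < p. U i l = c1 l"
    and U2: "\<forall>i. m \<le> i \<and> i < n \<longrightarrow> (\<forall>l < p. U i l = c2 l)"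
    and centres_differ: "\<exists>l < p. c1 l \<noteq> c2 l"
    and indep: "indep_vars (\<lambda>_. PiM {..<p} (\<lambda>_. borel)) (\<lambda>i \<omega>. restrict (E \<omega> i) {..<p}) {..<n}"
    and mean0: "\<forall>i < n. \<forall>l < p. integrable M (\<lambda>\<omega>. E \<omega> i l) \<and> expectation (\<lambda>\<omega>. E \<omega> i l) = 0"
    and subg: "\<forall>i < n. subgaussian_norm M p (\<lambda>\<omega>. E \<omega> i) = ereal \<sigma>"
    and Phi: "\<forall>i < n. \<forall>j < n. \<Phi> i j =
       (if i \<noteq> j \<and> ((\<forall>l < p. U i l = U j l) \<or> (i \<in> S \<and> j = i + m) \<or> (j \<in> S \<and> i = j + m))
        then 1 else 0)"
begin

lemma same_centre_iff_same_side:
  assumes "i < n" "j < n"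
  shows "(\<forall>l<p. U i l = U j l) \<longleftrightarrow> (i < m) = (j < m)"
proof -
  obtain l0 where l0: "l0 < p" "c1 l0 \<noteq> c2 l0" using centres_differ by blast
  show ?thesis
  proof (cases "i < m"; cases "j < m")
    assume "i < m" "j < m" then show ?thesis using U1 by simp
  next
    assume "\<not> i < m" "\<not> j < m" then show ?thesis using U2 assms by simp
  next
    assume "i < m" "\<not> j < m"
    then have "U i l0 \<noteq> U j l0" using U1 U2 assms l0 by simp
    then show ?thesis using \<open>i < m\<close> \<open>\<not> j < m\<close> l0 by auto
  next
    assume "\<not> i < m" "j < m"
    then have "U i l0 \<noteq> U j l0" using U1 U2 assms l0 by simp
    then show ?thesis using \<open>\<not> i < m\<close> \<open>j < m\<close> l0 by auto
  qed
qed

lemma Phi_eq_adj: "i < n \<Longrightarrow> j < n \<Longrightarrow> \<Phi> i j = adj i j"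
  using Phi same_centre_iff_same_side m_pos by (auto simp: adj_def)

lemma pseudo_inverse_incidence: "pseudo_inverse (incidence_mat n \<Phi>) = edge_diff_mat n \<Phi> lap_pinv"
proof (rule pseudo_inverse_incidence_mat)
  show "\<forall>i<n. \<forall>j<n. \<Phi> i j \<in> {0, 1}" "\<forall>i<n. \<forall>j<n. \<Phi> i j = \<Phi> j i"
    by (auto simp: Phi_eq_adj adj_def)
  show "\<forall>i<n. \<forall>j<n. lap_pinv i j = lap_pinv j i" using lap_pinv_sym by blast
  show "\<forall>i<n. (\<Sum>j<n. lap_pinv i j) = 0" using lap_pinv_row_sum n_eq by simp
  have "(\<Sum>t<n. \<Phi> i t * (lap_pinv i j - lap_pinv t j)) = (if i = j then 1 else 0) - 1 / real n"
    if "i < n" "j < n" for i j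
    using that laplacian_lap_pinv[of i j] n_eq by (simp add: Phi_eq_adj)
  then show "\<forall>i<n. \<forall>j<n. (\<Sum>t<n. \<Phi> i t * (lap_pinv i j - lap_pinv t j)) = (if i = j then 1 else 0) - 1 / real n"
    by blast
qed

lemma edge_cases:
  assumes "(a, b) \<in> edge_set n \<Phi>"
  shows "(b = a + m \<and> a \<in> S) \<or> (b \<noteq> a + m \<and> (a < m) = (b < m) \<and> a \<noteq> b)"
  using assms S_subset n_eq by (auto simp: edge_set_def Phi_eq_adj adj_def split: if_splits)

lemma cross_edges: "{e \<in> edge_set n \<Phi>. snd e = fst e + m} = (\<lambda>i. (i, i + m)) ` S"
proof (intro equalityI subsetI)
  fix e assume e: "e \<in> {e \<in> edge_set n \<Phi>. snd e = fst e + m}"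
  obtain a b where ab: "e = (a, b)" by fastforce
  then have "a \<in> S" "b = a + m" using e edge_cases[of a b] by auto
  then show "e \<in> (\<lambda>i. (i, i + m)) ` S" using ab by auto
next
  fix e assume "e \<in> (\<lambda>i. (i, i + m)) ` S"
  then obtain i where "i \<in> S" "e = (i, i + m)" by auto
  moreover have "i < m" using \<open>i \<in> S\<close> S_subset by auto
  ultimately show "e \<in> {e \<in> edge_set n \<Phi>. snd e = fst e + m}"
    using n_eq by (auto simp: edge_set_def Phi_eq_adj adj_def)
qed

lemma card_cross_edges: "card {e \<in> edge_set n \<Phi>. snd e = fst e + m} = k"
  unfolding cross_edges using card_S by (subst card_image) (auto simp: inj_on_def)

lemma sum_edge_set_vnorm:
  "(\<Sum>(i, j) \<in> edge_set n \<Phi>. sqrt (\<Phi> i j) * vnorm p (\<lambda>l. U i l - U j l))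
    = real k * vnorm p (\<lambda>l. c1 l - c2 l)"
proof -
  let ?C = "{e \<in> edge_set n \<Phi>. snd e = fst e + m}"
  have "(\<Sum>(i, j) \<in> edge_set n \<Phi>. sqrt (\<Phi> i j) * vnorm p (\<lambda>l. U i l - U j l))
      = (\<Sum>e \<in> edge_set n \<Phi>. if snd e = fst e + m then vnorm p (\<lambda>l. c1 l - c2 l) else 0)"
  proof (intro sum.cong refl)
    fix e assume e: "e \<in> edge_set n \<Phi>"
    obtain a b where ab: "e = (a, b)" by fastforce
    have "a < n" "b < n" "\<Phi> a b \<noteq> 0" using e ab by (auto simp: edge_set_def)
    then have "\<Phi> a b = 1" by (simp add: Phi_eq_adj adj_def split: if_splits)
    show "(case e of (i, j) \<Rightarrow> sqrt (\<Phi> i j) * vnorm p (\<lambda>l. U i l - U j l))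
        = (if snd e = fst e + m then vnorm p (\<lambda>l. c1 l - c2 l) else 0)"
    proof (cases "b = a + m")
      case True
      then have "a < m" using \<open>b < n\<close> n_eq by simp
      then have "\<forall>l<p. U a l - U b l = c1 l - c2 l" using U1 U2 \<open>b < n\<close> True by auto
      then show ?thesis using True e ab \<open>\<Phi> a b = 1\<close> by (simp add: vnorm_def)
    next
      case False
      then have "\<forall>l<p. U a l = U b l"
        using edge_cases[of a b] e ab same_centre_iff_same_side[OF \<open>a < n\<close> \<open>b < n\<close>] by auto
      then show ?thesis using False ab by (simp add: vnorm_def)
    qed
  qed
  also have "\<dots> = real (card ?C) * vnorm p (\<lambda>l. c1 l - c2 l)"
    using finite_edge_set by (simp flip: sum.inter_filter)
  finally show ?thesis by (simp add: card_cross_edges)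
qed

definition \<beta> :: real where "\<beta> = sqrt (2 / real n) * real n / real k + 8 / real n"

definition \<tau> :: real where "\<tau> = \<sigma> * sqrt (ln (real (n * p))) * \<beta>"

definition edge_noise :: "nat \<times> nat \<Rightarrow> nat \<Rightarrow> 'a \<Rightarrow> real" where
  "edge_noise e l \<omega> = (\<Sum>i<n. (lap_pinv (fst e) i - lap_pinv (snd e) i) * E \<omega> i l)"

definition tail_budget :: "nat \<times> nat \<Rightarrow> real" where
  "tail_budget e = (if snd e = fst e + m then 2 / real (n * p) ^ 2 else 2 / real (n * p) ^ 3)"

lemma n_pos: "real n > 0"
  using n_eq m_pos by simp

lemma np_ge: "real (n * p) \<ge> 6"
proof -
  have "6 * 1 \<le> n * p" using n_eq m_ge p_pos by (intro mult_le_mono) auto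
  then show ?thesis by linarith
qed

lemma \<beta>_pos: "\<beta> > 0"
  using n_pos k_pos by (simp add: \<beta>_def add_pos_nonneg)

lemma var_bound_le_sq_\<beta>: "var_bound \<le> \<beta>^2"
proof -
  have "(sqrt (2 / real n) * real n / real k)^2 = 4 * real m / (real k)^2"
    using n_pos n_eq by (simp add: power_divide power_mult_distrib power2_eq_square field_simps)
  moreover have "(8 / real n)^2 = 16 / (real m)^2"
    using n_eq by (simp add: power_divide power2_eq_square)
  moreover have "0 \<le> 2 * (sqrt (2 / real n) * real n / real k) * (8 / real n)"
    by simp
  ultimately show ?thesis
    unfolding \<beta>_def var_bound_def power2_sum by linarith
qed

lemma \<sigma>_nonneg: "\<sigma> \<ge> 0"
  using subgaussian_norm_nonneg[of p M "\<lambda>\<omega>. E \<omega> 0"] subg n_pos p_pos by simp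

lemma E_measurable [measurable]: "i < n \<Longrightarrow> l < p \<Longrightarrow> (\<lambda>\<omega>. E \<omega> i l) \<in> borel_measurable M"
  using mean0 by auto

lemma indep_coord: "l < p \<Longrightarrow> indep_vars (\<lambda>_. borel) (\<lambda>i \<omega>. E \<omega> i l) {..<n}"
  using indep_vars_compose2[OF indep, of "\<lambda>_ f. f l"] by simp

lemma E_psi2:
  "i < n \<Longrightarrow> l < p \<Longrightarrow> K > \<sigma> \<Longrightarrow> (\<integral>\<^sup>+\<omega>. ennreal (exp ((E \<omega> i l)^2 / K^2)) \<partial>M) \<le> 2"
  by (rule subgaussian_norm_coord_psi2[where Y = "\<lambda>\<omega>. E \<omega> i"]) (use subg in auto)

lemma edge_noise_measurable [measurable]: "l < p \<Longrightarrow> edge_noise e l \<in> borel_measurable M"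
  unfolding edge_noise_def by measurable

lemma sq_lap_pinv_diff_le:
  assumes "(a, b) \<in> edge_set n \<Phi>"
  obtains j where "j > 0" and "4 * real j * (\<Sum>i<n. (lap_pinv a i - lap_pinv b i)^2) \<le> var_bound"
    and "tail_budget (a, b) = 2 / real (n * p) ^ j"
proof (cases "b = a + m")
  case True
  then have "a < m" "a \<in> S" using assms edge_cases[OF assms] n_eq by (auto simp: edge_set_def)
  then have "4 * real 2 * (\<Sum>i<n. (lap_pinv a i - lap_pinv b i)^2) \<le> var_bound"
    using sum_sq_lap_pinv_diff_partner True by (simp add: n_eq)
  moreover have "tail_budget (a, b) = 2 / real (n * p) ^ 2" using True by (simp add: tail_budget_def)
  ultimately show ?thesis using that[of 2] by simp
next
  case False
  then have "(a < m) = (b < m)" "a \<noteq> b" using edge_cases[OF assms] by auto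
  moreover have "a < 2 * m" "b < 2 * m" using assms n_eq by (auto simp: edge_set_def)
  ultimately have "4 * real 3 * (\<Sum>i<n. (lap_pinv a i - lap_pinv b i)^2) \<le> var_bound"
    using sum_sq_lap_pinv_diff_same_side[of a b] by (simp add: n_eq)
  moreover have "tail_budget (a, b) = 2 / real (n * p) ^ 3" using False by (simp add: tail_budget_def)
  ultimately show ?thesis using that[of 3] by simp
qed

lemma edge_noise_tail:
  assumes e: "e \<in> edge_set n \<Phi>" and l: "l < p"
  shows "prob {\<omega> \<in> space M. \<tau> < \<bar>edge_noise e l \<omega>\<bar>} \<le> tail_budget e"
proof -
  obtain a b where ab: "e = (a, b)" by fastforce
  define r where "r i = lap_pinv a i - lap_pinv b i" for i
  define s where "s = sqrt (ln (real (n * p))) * \<beta>"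
  obtain j where j: "j > 0" "4 * real j * (\<Sum>i<n. (r i)^2) \<le> var_bound" "tail_budget e = 2 / real (n * p) ^ j"
    using sq_lap_pinv_diff_le[of a b] e unfolding ab r_def by blast
  define \<rho> where "\<rho> = var_bound / (4 * real j)"
  have \<rho>: "\<rho> > 0" "(\<Sum>i<n. (r i)^2) \<le> \<rho>" "4 * real j * \<rho> \<le> var_bound"
    using j var_bound_pos by (auto simp: \<rho>_def field_simps)
  have s: "s > 0" "ln (real (n * p)) * var_bound \<le> s^2"
    using np_ge \<beta>_pos var_bound_le_sq_\<beta> by (auto simp: s_def power_mult_distrib intro: mult_left_mono)
  have "prob {\<omega> \<in> space M. \<sigma> * s < \<bar>edge_noise e l \<omega>\<bar>} \<le> 2 * exp (- (s^2) / (4 * \<rho>))"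
  proof (rule measure_gt_le_of_ge)
    fix c assume c: "c > \<sigma> * s"
    define K where "K = c / s"
    have "c > 0" using c s(1) \<sigma>_nonneg by (smt (verit) mult_nonneg_nonneg)
    then have K: "K > \<sigma>" "K > 0" "c = K * s" using c s(1) by (auto simp: K_def field_simps)
    have "prob {\<omega> \<in> space M. K * s \<le> \<bar>\<Sum>i\<in>{..<n}. r i * E \<omega> i l\<bar>} \<le> 2 * exp (- ((K * s)^2) / (4 * K^2 * \<rho>))"
      using mean0 l K s E_psi2
      by (intro weighted_sum_abs_tail[OF _ indep_coord[OF l] _ K(2) \<rho>(2) \<rho>(1)]) auto
    moreover have "- ((K * s)^2) / (4 * K^2 * \<rho>) = - (s^2) / (4 * \<rho>)"
      using K \<rho> by (simp add: power_mult_distrib)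
    ultimately show "prob {\<omega> \<in> space M. c \<le> \<bar>edge_noise e l \<omega>\<bar>} \<le> 2 * exp (- (s^2) / (4 * \<rho>))"
      by (simp add: K(3) edge_noise_def ab r_def)
  qed (use l in simp)
  also have "\<dots> \<le> 2 * (1 / real (n * p) ^ j)"
    using exp_tail_le_power[OF \<rho>(3) s(2) \<rho>(1) var_bound_pos] np_ge by simp
  finally show ?thesis by (simp add: j(3) \<tau>_def s_def mult.assoc)
qed

lemma failure_budget: "real p * (\<Sum>e \<in> edge_set n \<Phi>. tail_budget e) \<le> 2 / (real n * real p)"
proof -
  define N where "N = real n * real p"
  have N: "N > 0" using n_pos p_pos by (simp add: N_def)
  have "(\<Sum>e \<in> edge_set n \<Phi>. tail_budget e)
      \<le> (\<Sum>e \<in> edge_set n \<Phi>. (if snd e = fst e + m then 2 / N^2 else 0) + 2 / N^3)"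
    using N by (intro sum_mono) (auto simp: tail_budget_def N_def)
  also have "\<dots> = real k * (2 / N^2) + real (card (edge_set n \<Phi>)) * (2 / N^3)"
    using finite_edge_set by (simp add: sum.distrib card_cross_edges flip: sum.inter_filter)
  finally have "real p * (\<Sum>e \<in> edge_set n \<Phi>. tail_budget e)
      \<le> real p * (real k * (2 / N^2) + real (card (edge_set n \<Phi>)) * (2 / N^3))"
    by (rule mult_left_mono) simp
  also have "\<dots> = real p * (real k * (2 / N^2)) + real p * (real (card (edge_set n \<Phi>)) * (2 / N^3))"
    by (simp only: distrib_left)
  also have "real p * (real k * (2 / N^2)) \<le> 1 / N"
  proof -
    have "2 * real k \<le> real n" using k_le n_eq by simp
    then have "real p * (real k * (2 / N^2)) \<le> real p * (real n / N^2)"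
      using p_pos N by (intro mult_left_mono) (auto simp: field_simps)
    then show ?thesis using n_pos p_pos by (simp add: N_def power2_eq_square)
  qed
  also have "real p * (real (card (edge_set n \<Phi>)) * (2 / N^3)) \<le> 1 / N"
  proof -
    have "2 * real (card (edge_set n \<Phi>)) \<le> real n * real n"
      using card_edge_set_le[of n \<Phi>] by (simp flip: of_nat_mult)
    then have "real p * (real (card (edge_set n \<Phi>)) * (2 / N^3)) \<le> real p * (real n * real n / N^3)"
      using p_pos N by (intro mult_left_mono) (auto simp: field_simps)
    also have "\<dots> = 1 / (N * real p)" using n_pos p_pos by (simp add: N_def power3_eq_cube)
    also have "\<dots> \<le> 1 / N" using N p_pos by (simp add: field_simps)
    finally show ?thesis .
  qed
  finally show ?thesis by (simp add: N_def)
qed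

lemma max_norm_noise_le_iff:
  "max_norm (pseudo_inverse (incidence_mat n \<Phi>) * mat n p (\<lambda>(i, l). E \<omega> i l)) \<le> \<tau>
    \<longleftrightarrow> (\<forall>e \<in> edge_set n \<Phi>. \<forall>l<p. \<bar>edge_noise e l \<omega>\<bar> \<le> \<tau>)"
proof -
  define A where "A = edge_diff_mat n \<Phi> lap_pinv * mat n p (\<lambda>(i, l). E \<omega> i l)"
  have dim: "dim_row A = length (edge_list n \<Phi>)" "dim_col A = p"
    by (simp_all add: A_def edge_diff_mat_def)
  have entry: "A $$ (c, l) = edge_noise (edge_list n \<Phi> ! c) l \<omega>"
    if "c < length (edge_list n \<Phi>)" "l < p" for c l
    using that by (simp add: A_def edge_diff_mat_mult_entry edge_noise_def)
  have "\<tau> \<ge> 0"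
    using \<sigma>_nonneg \<beta>_pos np_ge by (simp add: \<tau>_def)
  then show ?thesis
    unfolding pseudo_inverse_incidence A_def[symmetric] max_norm_le_iff[OF \<open>\<tau> \<ge> 0\<close>] dim
    by (simp add: entry all_set_conv_all_nth flip: set_edge_list)
qed

lemma bound_eq_\<tau>:
  "\<sigma> * sqrt (ln (real (n * p)) / real p) * (sqrt (2 / real n) + 8 * real k / (real n)\<^sup>2)
     * vnorm p (\<lambda>l. c1 l - c2 l)
   = \<tau> * (real k * vnorm p (\<lambda>l. c1 l - c2 l) / (real n * sqrt (real p)))"
proof -
  have "(x * real n / real k + 8 / real n) * real k / real n = x + 8 * real k / (real n)\<^sup>2" for x
    using n_pos k_pos by (simp add: field_simps power2_eq_square)
  then have "\<beta> * real k / real n = sqrt (2 / real n) + 8 * real k / (real n)\<^sup>2"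
    unfolding \<beta>_def by blast
  moreover have "\<tau> * (real k * vnorm p (\<lambda>l. c1 l - c2 l) / (real n * sqrt (real p)))
      = \<sigma> * (sqrt (ln (real (n * p))) / sqrt (real p)) * (\<beta> * real k / real n) * vnorm p (\<lambda>l. c1 l - c2 l)"
    using n_pos p_pos by (simp add: \<tau>_def field_simps)
  ultimately show ?thesis
    by (simp only: real_sqrt_divide)
qed

lemma vnorm_centres_pos: "vnorm p (\<lambda>l. c1 l - c2 l) > 0"
proof -
  obtain l0 where "l0 < p" "c1 l0 \<noteq> c2 l0" using centres_differ by blast
  then have "0 < (c1 l0 - c2 l0)^2" "(c1 l0 - c2 l0)^2 \<le> (\<Sum>l<p. (c1 l - c2 l)^2)"
    by (auto intro: member_le_sum)
  then have "0 < (\<Sum>l<p. (c1 l - c2 l)^2)" by linarith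
  then show ?thesis by (simp add: vnorm_def)
qed

lemma good_event_eq:
  "{\<omega> \<in> space M.
      max_norm (pseudo_inverse (incidence_mat n \<Phi>) * mat n p (\<lambda>(i, l). E \<omega> i l))
        / (real n * sqrt (real p))
        * (\<Sum>(i, j) \<in> edge_set n \<Phi>. sqrt (\<Phi> i j) * vnorm p (\<lambda>l. U i l - U j l))
      \<le> \<sigma> * sqrt (ln (real (n * p)) / real p)
        * (sqrt (2 / real n) + 8 * real k / (real n)\<^sup>2)
        * vnorm p (\<lambda>l. c1 l - c2 l)}
   = space M - (\<Union>(e, l) \<in> edge_set n \<Phi> \<times> {..<p}. {\<omega> \<in> space M. \<tau> < \<bar>edge_noise e l \<omega>\<bar>})"
proof -
  define w where "w = real k * vnorm p (\<lambda>l. c1 l - c2 l) / (real n * sqrt (real p))"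
  have w: "w > 0" using k_pos n_pos p_pos vnorm_centres_pos by (simp add: w_def)
  have "x / (real n * sqrt (real p))
        * (\<Sum>(i, j) \<in> edge_set n \<Phi>. sqrt (\<Phi> i j) * vnorm p (\<lambda>l. U i l - U j l))
      \<le> \<sigma> * sqrt (ln (real (n * p)) / real p)
        * (sqrt (2 / real n) + 8 * real k / (real n)\<^sup>2)
        * vnorm p (\<lambda>l. c1 l - c2 l)
      \<longleftrightarrow> x \<le> \<tau>" for x
  proof -
    have "x / (real n * sqrt (real p))
        * (\<Sum>(i, j) \<in> edge_set n \<Phi>. sqrt (\<Phi> i j) * vnorm p (\<lambda>l. U i l - U j l)) = x * w"
      by (simp add: sum_edge_set_vnorm w_def)
    then show ?thesis using w unfolding bound_eq_\<tau> w_def[symmetric] by simp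
  qed
  then show ?thesis
    by (simp only: max_norm_noise_le_iff) (force simp: not_le)
qed

theorem prob_good_event:
  "prob {\<omega> \<in> space M.
      max_norm (pseudo_inverse (incidence_mat n \<Phi>) * mat n p (\<lambda>(i, l). E \<omega> i l))
        / (real n * sqrt (real p))
        * (\<Sum>(i, j) \<in> edge_set n \<Phi>. sqrt (\<Phi> i j) * vnorm p (\<lambda>l. U i l - U j l))
      \<le> \<sigma> * sqrt (ln (real (n * p)) / real p)
        * (sqrt (2 / real n) + 8 * real k / (real n)\<^sup>2)
        * vnorm p (\<lambda>l. c1 l - c2 l)}
    \<ge> 1 - 2 / (real n * real p)"
proof -
  define bad where "bad = (\<lambda>(e, l). {\<omega> \<in> space M. \<tau> < \<bar>edge_noise e l \<omega>\<bar>})"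
  let ?bad = "\<Union>x \<in> edge_set n \<Phi> \<times> {..<p}. bad x"
  have sets: "bad ` (edge_set n \<Phi> \<times> {..<p}) \<subseteq> sets M"
    by (auto simp: bad_def)
  have "prob ?bad \<le> (\<Sum>x \<in> edge_set n \<Phi> \<times> {..<p}. prob (bad x))"
    using finite_edge_set sets by (intro finite_measure_subadditive_finite) auto
  also have "\<dots> \<le> (\<Sum>(e, l) \<in> edge_set n \<Phi> \<times> {..<p}. tail_budget e)"
    using edge_noise_tail by (intro sum_mono) (auto simp: bad_def)
  also have "\<dots> = real p * (\<Sum>e \<in> edge_set n \<Phi>. tail_budget e)"
    by (simp add: sum.cartesian_product[symmetric] sum_distrib_left mult.commute)
  also have "\<dots> \<le> 2 / (real n * real p)" by (rule failure_budget)
  finally have "prob ?bad \<le> 2 / (real n * real p)" .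
  moreover have "?bad \<in> sets M" using finite_edge_set sets by auto
  ultimately show ?thesis
    unfolding good_event_eq by (simp add: prob_compl bad_def)
qed

end

lemma corollary_bound_nonneg:
  assumes "\<sigma> \<ge> 0" and "1 \<le> n * p"
  shows "0 \<le> \<sigma> * sqrt (ln (real (n * p)) / real p)
    * (sqrt (2 / real n) + 8 * real k / (real n)\<^sup>2) * vnorm p (\<lambda>l. c1 l - c2 l)"
proof -
  have "1 \<le> real (n * p)" using assms(2) by linarith
  then have "0 \<le> ln (real (n * p)) / real p" by simp
  then show ?thesis
    using assms(1) by (intro mult_nonneg_nonneg add_nonneg_nonneg) (auto simp: vnorm_def sum_nonneg)
qed

theorem corollary3p4:
  fixes M :: "'a measure" and n p k :: nat and \<sigma> :: real
    and E :: "'a \<Rightarrow> nat \<Rightarrow> nat \<Rightarrow> real"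
    and U :: "nat \<Rightarrow> nat \<Rightarrow> real" and c1 c2 :: "nat \<Rightarrow> real"
    and S :: "nat set" and \<Phi> :: "nat \<Rightarrow> nat \<Rightarrow> real"
  assumes "prob_space M"
    and "even n" and "n \<ge> 6" and "p \<ge> 1"
    and U1: "\<forall>i < n div 2. \<forall>l < p. U i l = c1 l"
    and U2: "\<forall>i. n div 2 \<le> i \<and> i < n \<longrightarrow> (\<forall>l < p. U i l = c2 l)"
    and indep: "prob_space.indep_vars M (\<lambda>_. PiM {..<p} (\<lambda>_. borel))
                  (\<lambda>i \<omega>. restrict (E \<omega> i) {..<p}) {..<n}"
    and mean0: "\<forall>i < n. \<forall>l < p. integrable M (\<lambda>\<omega>. E \<omega> i l) \<and>
                  prob_space.expectation M (\<lambda>\<omega>. E \<omega> i l) = 0"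
    and subg: "\<forall>i < n. subgaussian_norm M p (\<lambda>\<omega>. E \<omega> i) = ereal \<sigma>"
    and S: "S \<subseteq> {..<n div 2}" "card S = k" "1 \<le> k" "k \<le> n div 2"
    and Phi: "\<forall>i < n. \<forall>j < n. \<Phi> i j =
       (if i \<noteq> j \<and> ((\<forall>l < p. U i l = U j l)
             \<or> (i \<in> S \<and> j = i + n div 2) \<or> (j \<in> S \<and> i = j + n div 2))
        then 1 else 0)"
  shows "prob_space.prob M {\<omega> \<in> space M.
      max_norm (pseudo_inverse (incidence_mat n \<Phi>) * mat n p (\<lambda>(i, l). E \<omega> i l))
        / (real n * sqrt (real p))
        * (\<Sum>(i, j) \<in> edge_set n \<Phi>. sqrt (\<Phi> i j) * vnorm p (\<lambda>l. U i l - U j l))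
      \<le> \<sigma> * sqrt (ln (real (n * p)) / real p)
        * (sqrt (2 / real n) + 8 * real k / (real n)\<^sup>2)
        * vnorm p (\<lambda>l. c1 l - c2 l)}
    \<ge> 1 - 2 / (real n * real p)"
proof -
  interpret prob_space M by fact
  interpret two_cluster_graph "n div 2" k S
    using S \<open>n \<ge> 6\<close> by unfold_locales auto
  show ?thesis
  proof (cases "\<exists>l < p. c1 l \<noteq> c2 l")
    case True
    interpret two_cluster_model "n div 2" k S M n p \<sigma> E U c1 c2 \<Phi>
      using assms True by unfold_locales auto
    show ?thesis by (rule prob_good_event)
  next
    case False
    then have "\<forall>i<n. \<forall>j<n. \<forall>l<p. U i l = U j l"
      using U1 U2 by (metis not_le)
    then have "(\<Sum>(i, j) \<in> edge_set n \<Phi>. sqrt (\<Phi> i j) * vnorm p (\<lambda>l. U i l - U j l)) = 0"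
      by (rule sum_edge_set_vnorm_eq_0)
    moreover have "\<sigma> \<ge> 0"
      using subgaussian_norm_nonneg[of p M "\<lambda>\<omega>. E \<omega> 0"] subg assms(3,4) by simp
    moreover have "1 * 1 \<le> n * p" using assms(3,4) by (intro mult_le_mono) auto
    ultimately show ?thesis
      using corollary_bound_nonneg[of \<sigma> n p k c1 c2] by (simp add: prob_space)
  qed
qed

end
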